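(* Let $(\mathbf X_1,\mathbf Y_1)$ and $(\mathbf X_2,\mathbf Y_2)$ be general correlated sources, both uniformly integrable, with $\underline D(\mathbf X_1\Vert\mathbf X_2)>0$ and $\underline D(\mathbf X_2\Vert\mathbf X_1)>0$, and let $(\mathbf X,\mathbf Y)$ be their mixture $P_{X^nY^n}=\alpha_1P_{X_1^nY_1^n}+\alpha_2P_{X_2^nY_2^n}$ with $\alpha_1,\alpha_2>0$, $\alpha_1+\alpha_2=1$. If for $i=1$ or for $i=2$ (or both) the limit $\lim_{n\to\infty}\frac1n\overline H_s^\varepsilon(X_i^n|Y_i^n)$ exists for all sufficiently small $\varepsilon>0$, then \[\overline H_s(\mathbf X|\mathbf Y)=\sum_{i=1,2}\alpha_i\overline H_s(\mathbf X_i|\mathbf Y_i).\]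
   Context: A general correlated source $\{(X^n,Y^n)\}_{n\ge1}$ is an arbitrary sequence of pairs of random variables on $\mathcal X^n\times\mathcal Y^n$, $\mathcal X,\mathcal Y$ finite or countably infinite (no structural assumptions; marginal probabilities positive). Logs base 2. A source is uniformly integrable if $Z_n=\frac1n\log\frac1{P_{X^n|Y^n}(X^n|Y^n)}$ satisfies $\lim_{u\to\infty}\sup_n\sum_{z:|z|\ge u}P_{Z_n}(z)|z|=0$. $\underline D(\mathbf X_1\Vert\mathbf X_2)=\sup\{\beta:\lim_n\Pr\{\frac1n\log\frac{P_{X_1^n}(X_1^n)}{P_{X_2^n}(X_1^n)}<\beta\}=0\}$ with $X_1^n\sim P_{X_1^n}$ (marginals on $\mathcal X^n$). For a source with distributions $P_{X^nY^n}$, $x^n$ and $\varepsilon\in(0,1]$: $\overline h^\varepsilon(x^n|P_{X^nY^n})=\inf\{a\in\mathbb R:\sum_{y^n:\log(1/P_{X^n|Y^n}(x^n|y^n))>a}P_{Y^n|X^n}(y^n|x^n)\le\varepsilon\}$; $\overline H_s^\varepsilon(X^n|Y^n)=\sum_{x^n}P_{X^n}(x^n)\overline h^\varepsilon(x^n|P_{X^nY^n})$; $\overline H_s(\mathbf X|\mathbf Y)=\lim_{\varepsilon\downarrow0}\limsup_n\frac1n\overline H_s^\varepsilon(X^n|Y^n)$; same definitions for each component $(\mathbf X_i,\mathbf Y_i)$. *)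

theory Defs
  imports "HOL-Probability.Probability"
begin

type_synonym ('a, 'b) source = "nat \<Rightarrow> ('a list \<times> 'b list) pmf"

definition general_source :: "('a::countable, 'b::countable) source \<Rightarrow> bool" where
  "general_source P \<longleftrightarrow>
     (\<forall>n. set_pmf (P n) \<subseteq> {(x, y). length x = n \<and> length y = n}) \<and>
     (\<forall>n x. length x = n \<longrightarrow> pmf (map_pmf fst (P n)) x > 0) \<and>
     (\<forall>n y. length y = n \<longrightarrow> pmf (map_pmf snd (P n)) y > 0)"

definition PX :: "('a, 'b) source \<Rightarrow> nat \<Rightarrow> 'a list \<Rightarrow> real" where
  "PX P n x = pmf (map_pmf fst (P n)) x"

definition PY :: "('a, 'b) source \<Rightarrow> nat \<Rightarrow> 'b list \<Rightarrow> real" where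
  "PY P n y = pmf (map_pmf snd (P n)) y"

definition condXY :: "('a, 'b) source \<Rightarrow> nat \<Rightarrow> 'a list \<Rightarrow> 'b list \<Rightarrow> real" where
  "condXY P n x y = pmf (P n) (x, y) / PY P n y"

definition condYX :: "('a, 'b) source \<Rightarrow> nat \<Rightarrow> 'a list \<Rightarrow> 'b list \<Rightarrow> real" where
  "condYX P n x y = pmf (P n) (x, y) / PX P n x"

definition Zdist :: "('a, 'b) source \<Rightarrow> nat \<Rightarrow> real pmf" where
  "Zdist P n = map_pmf (\<lambda>(x, y). (1 / real n) * log 2 (1 / condXY P n x y)) (P n)"

definition uniformly_integrable :: "('a, 'b) source \<Rightarrow> bool" where
  "uniformly_integrable P \<longleftrightarrow>
     ((\<lambda>u::real. SUP n\<in>{1..}. (\<Sum>\<^sub>\<infinity> z\<in>{z. \<bar>z\<bar> \<ge> u}. ennreal (pmf (Zdist P n) z * \<bar>z\<bar>)))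
        \<longlongrightarrow> 0) at_top"

definition D_lower :: "('a, 'b) source \<Rightarrow> ('a, 'c) source \<Rightarrow> ereal" where
  "D_lower P1 P2 = Sup {ereal \<beta> | \<beta>.
     (\<lambda>n. measure_pmf.prob (map_pmf fst (P1 n))
            {x. (1 / real n) * log 2 (PX P1 n x / PX P2 n x) < \<beta>}) \<longlonglongrightarrow> 0}"

definition hbar :: "('a, 'b) source \<Rightarrow> nat \<Rightarrow> real \<Rightarrow> 'a list \<Rightarrow> real" where
  "hbar P n \<epsilon> x = Inf {a::real.
     (\<Sum>\<^sub>\<infinity> y\<in>{y. log 2 (1 / condXY P n x y) > a}. condYX P n x y) \<le> \<epsilon>}"

text \<open>\<open>Hs_eps P \<epsilon> n\<close> is \<open>\<Sum>_x P_{X^n}(x) hbar^\<epsilon>(x)\<close>; for 0 < \<epsilon> < 1 all terms are nonnegative,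
  so the sum is taken in the nonnegative extended reals (it may be infinite).\<close>
definition Hs_eps :: "('a, 'b) source \<Rightarrow> real \<Rightarrow> nat \<Rightarrow> ennreal" where
  "Hs_eps P \<epsilon> n = (\<Sum>\<^sub>\<infinity> x. ennreal (PX P n x * hbar P n \<epsilon> x))"

definition Hs_rate :: "('a, 'b) source \<Rightarrow> real \<Rightarrow> nat \<Rightarrow> ereal" where
  "Hs_rate P \<epsilon> n = ereal (1 / real n) * enn2ereal (Hs_eps P \<epsilon> n)"

definition Hs_upper :: "('a, 'b) source \<Rightarrow> ereal" where
  "Hs_upper P = Lim (at_right 0) (\<lambda>\<epsilon>. limsup (\<lambda>n. Hs_rate P \<epsilon> n))"

end

theory Submission
  imports Defs
begin

text \<open>
  Write \<open>M = a A + b B\<close> for the mixture. Since \<open>P_M(x) = a P_A(x) + b P_B(x)\<close>, the sum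
  \<open>\<Sum>_x P_M(x) hbar_M(x)\<close> splits into \<open>a \<Sum>_x P_A(x) hbar_M(x) + b \<Sum>_x P_B(x) hbar_M(x)\<close>, so it
  suffices to compare \<open>hbar_M(x)\<close> with \<open>hbar_A(x)\<close> for inputs \<open>x\<close> drawn from \<open>A\<close>, and symmetrically
  for \<open>B\<close>. Since \<open>D(A||B) > 0\<close>, a typical input of \<open>A\<close> has \<open>P_B(x)\<close> exponentially smaller than
  \<open>P_A(x)\<close>, and then the conditional laws of the output under \<open>M\<close> and under \<open>A\<close> agree up to a
  factor \<open>2^(n\<delta>)\<close> except on outputs of small probability. At such inputs the quantiles of the two
  conditional information densities are sandwiched,
  \<open>hbar_A^(\<epsilon>+\<eta>) - n\<delta> \<le> hbar_M^\<epsilon> \<le> hbar_A^(\<epsilon>-\<eta>) + n\<delta>\<close>.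
  The remaining inputs have vanishing probability; since a quantile is bounded by Markov's inequality
  through the conditional mean of the information density, uniform integrability makes their
  contribution \<open>o(n)\<close>. Dividing by \<open>n\<close>, letting \<open>n \<rightarrow> \<infinity>\<close> and then \<open>\<epsilon> \<rightarrow> 0\<close> gives the upper bound; for
  the lower bound the limsup of a sum must dominate the sum of the limsups, which holds because one
  of the two rate sequences converges.
\<close>

lemma le_add_if_le_all_greater:
  assumes "\<And>a. h < a \<Longrightarrow> z \<le> a + c"
  shows "z \<le> (h::real) + c"
proof -
  have "z - c \<le> h" by (rule dense_ge) (use assms in force)
  thus ?thesis by simp
qed

lemma ennreal_mult_le_add_shift:
  fixes p h h' c :: real
  assumes "p \<ge> 0" "h' \<ge> 0" "c \<ge> 0" "h \<le> h' + c"
  shows "ennreal (p * h) \<le> ennreal (p * h') + ennreal p * ennreal c"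
proof -
  have "p * h \<le> p * h' + p * c" using assms by (simp add: mult_left_mono flip: distrib_left)
  thus ?thesis using assms by (simp add: ennreal_leI flip: ennreal_plus ennreal_mult)
qed

lemma powr_neg_linear_tendsto_zero: "\<gamma> > 0 \<Longrightarrow> (\<lambda>n. 2 powr (-(real n * \<gamma>))) \<longlonglongrightarrow> 0"
proof -
  assume g: "\<gamma> > 0"
  have eq: "2 powr (-(real n * \<gamma>)) = (2 powr (-\<gamma>)) ^ n" for n
    by (simp add: powr_realpow[symmetric] powr_powr mult.commute)
  have "(2::real) powr (-\<gamma>) < 1" using g by (simp add: powr_less_one)
  hence "(\<lambda>n. (2 powr (-\<gamma>)) ^ n) \<longlonglongrightarrow> 0" by (intro LIMSEQ_realpow_zero) auto
  thus ?thesis by (simp add: eq)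
qed

lemma indicator_mult_le_truncation:
  fixes L u :: real
  assumes n: "n \<ge> 1" and L: "L \<ge> 0" and u: "u \<ge> 0"
  shows "indicator S z * ennreal L \<le>
    ennreal (real n) * (ennreal u * indicator S z
        + ennreal \<bar>L / real n\<bar> * indicator {t. \<bar>t\<bar> \<ge> u} (L / real n))"
proof (cases "\<bar>L / real n\<bar> \<ge> u")
  case True
  have "indicator S z * ennreal L \<le> ennreal L" by (auto simp: indicator_def)
  also have "\<dots> = ennreal (real n) * ennreal \<bar>L / real n\<bar>" using n L by (simp flip: ennreal_mult)
  also have "\<dots> \<le> ennreal (real n) * (ennreal u * indicator S z
      + ennreal \<bar>L / real n\<bar> * indicator {t. \<bar>t\<bar> \<ge> u} (L / real n))"
    using True by (intro mult_left_mono) auto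
  finally show ?thesis .
next
  case False
  hence "L \<le> real n * u" using n L by (simp add: field_simps)
  hence "indicator S z * ennreal L \<le> indicator S z * ennreal (real n * u)"
    by (intro mult_left_mono ennreal_leI) auto
  also have "\<dots> = ennreal (real n) * (ennreal u * indicator S z)" using u
      by (simp add: ennreal_mult mult_ac)
  also have "\<dots> \<le> ennreal (real n) * (ennreal u * indicator S z
      + ennreal \<bar>L / real n\<bar> * indicator {t. \<bar>t\<bar> \<ge> u} (L / real n))"
    by (intro mult_left_mono) auto
  finally show ?thesis .
qed

lemma enn2ereal_combination_le:
  assumes "X \<le> ennreal a * Y + ennreal b * Z + ennreal z" "a \<ge> 0" "b \<ge> 0" "z \<ge> 0"
  shows "enn2ereal X \<le> ereal a * enn2ereal Y + ereal b * enn2ereal Z + ereal z"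
proof -
  have "enn2ereal X \<le> enn2ereal (ennreal a * Y + ennreal b * Z + ennreal z)"
    using assms(1) by (simp add: less_eq_ennreal.rep_eq)
  thus ?thesis using assms by (simp add: plus_ennreal.rep_eq times_ennreal.rep_eq)
qed

lemma enn2ereal_le_combination_plus:
  assumes "ennreal a * Y + ennreal b * Z \<le> X + ennreal z" "a \<ge> 0" "b \<ge> 0" "z \<ge> 0"
  shows "ereal a * enn2ereal Y + ereal b * enn2ereal Z \<le> enn2ereal X + ereal z"
proof -
  have "enn2ereal (ennreal a * Y + ennreal b * Z) \<le> enn2ereal (X + ennreal z)"
    using assms(1) by (simp add: less_eq_ennreal.rep_eq)
  thus ?thesis using assms by (simp add: plus_ennreal.rep_eq times_ennreal.rep_eq)
qed

lemma ereal_lim_add_limsup_le: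
  fixes u v :: "nat \<Rightarrow> ereal"
  assumes u: "u \<longlonglongrightarrow> L" and u0: "\<And>n. u n \<ge> 0" and v0: "\<And>n. v n \<ge> 0"
  shows "L + limsup v \<le> limsup (\<lambda>n. u n + v n)"
proof (cases "L = \<infinity>")
  case True
  have "limsup u = L" using lim_imp_Limsup[of sequentially u L] u by simp
  moreover have "limsup u \<le> limsup (\<lambda>n. u n + v n)"
    by (intro Limsup_mono always_eventually allI) (use v0 in \<open>simp add: add_increasing2\<close>)
  ultimately show ?thesis using True by simp
next
  case False
  have "L \<ge> 0" using u u0 by (intro tendsto_lowerbound[OF u]) (auto intro: always_eventually)
  hence "\<bar>L\<bar> \<noteq> \<infinity>" using False by auto
  thus ?thesis using ereal_limsup_lim_add[OF u] by simp
qed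

lemma SUP_ereal_combination_antimono:
  fixes f g :: "real \<Rightarrow> ereal"
  assumes a: "a \<ge> 0" and b: "b \<ge> 0" and f0: "\<And>\<epsilon>. f \<epsilon> \<ge> 0" and g0: "\<And>\<epsilon>. g \<epsilon> \<ge> 0"
    and f: "\<And>\<epsilon> \<epsilon>'. 0 < \<epsilon> \<Longrightarrow> \<epsilon> \<le> \<epsilon>' \<Longrightarrow> \<epsilon>' < 1 \<Longrightarrow> f \<epsilon>' \<le> f \<epsilon>"
    and g: "\<And>\<epsilon> \<epsilon>'. 0 < \<epsilon> \<Longrightarrow> \<epsilon> \<le> \<epsilon>' \<Longrightarrow> \<epsilon>' < 1 \<Longrightarrow> g \<epsilon>' \<le> g \<epsilon>"
  shows "ereal a * (SUP \<epsilon>\<in>{0<..<1}. f \<epsilon>) + ereal b * (SUP \<epsilon>\<in>{0<..<1}. g \<epsilon>)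
    = (SUP \<epsilon>\<in>{0<..<1}. ereal a * f \<epsilon> + ereal b * g \<epsilon>)"
proof -
  let ?I = "{0<..<1::real}"
  have I: "?I \<noteq> {}" by (auto intro: exI[of _ "1/2"])
  have "(SUP \<epsilon>\<in>?I. ereal a * f \<epsilon> + ereal b * g \<epsilon>) = (SUP \<epsilon>\<in>?I. ereal a * f \<epsilon>)
      + (SUP \<epsilon>\<in>?I. ereal b * g \<epsilon>)"
  proof (rule SUP_ereal_add_directed)
    fix i j assume ij: "i \<in> ?I" "j \<in> ?I"
    show "\<exists>k\<in>?I. ereal a * f i + ereal b * g j \<le> ereal a * f k + ereal b * g k"
      using ij a b by (intro bexI[of _ "min i j"] add_mono ereal_mult_left_mono f g) auto
  qed (use a b f0 g0 in \<open>auto simp: ereal_zero_le_0_iff\<close>)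
  moreover have "ereal a * (SUP \<epsilon>\<in>?I. f \<epsilon>) = (SUP \<epsilon>\<in>?I. ereal a * f \<epsilon>)"
    using a by (intro SUP_ereal_mult_left[symmetric, OF I f0]) auto
  moreover have "ereal b * (SUP \<epsilon>\<in>?I. g \<epsilon>) = (SUP \<epsilon>\<in>?I. ereal b * g \<epsilon>)"
    using b by (intro SUP_ereal_mult_left[symmetric, OF I g0]) auto
  ultimately show ?thesis by simp
qed

lemma infsum_ennreal_eq_SUP_finite:
  fixes g :: "'a \<Rightarrow> ennreal"
  shows "(\<Sum>\<^sub>\<infinity>x\<in>A. g x) = (SUP X\<in>{X. X \<subseteq> A \<and> finite X}. sum g X)"
proof -
  have "(g has_sum (SUP X\<in>{X. X \<subseteq> A \<and> finite X}. sum g X)) A"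
    by (rule nonneg_bounded_partial_sums_imp_has_sum_SUP[where C=\<top>]) auto
  thus ?thesis by (rule infsumI)
qed

lemma infsum_ennreal_eq_nn_integral:
  fixes f :: "'a \<Rightarrow> real"
  assumes nn: "\<And>x. x \<in> A \<Longrightarrow> f x \<ge> 0"
  shows "(\<Sum>\<^sub>\<infinity>x\<in>A. ennreal (f x)) = (\<integral>\<^sup>+x. ennreal (f x) \<partial>count_space A)"
proof (cases "(\<integral>\<^sup>+x. ennreal (f x) \<partial>count_space A) = \<top>")
  case False
  have int: "integrable (count_space A) f"
    using False nn by (intro integrableI_nonneg) (auto simp: AE_count_space top.not_eq_extremum)
  hence abs: "Infinite_Set_Sum.abs_summable_on f A" by (simp add: abs_summable_on_def)
  have "(\<Sum>\<^sub>\<infinity>x\<in>A. ennreal (f x)) = (SUP X\<in>{X. X \<subseteq> A \<and> finite X}. ennreal (sum f X))"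
    unfolding infsum_ennreal_eq_SUP_finite
    by (intro SUP_cong refl) (auto intro!: sum_ennreal nn)
  also have "\<dots> = ennreal (infsetsum f A)"
    by (subst infsetsum_nonneg_is_SUPREMUM_ennreal[OF abs nn]) (auto intro!: SUP_cong)
  also have "\<dots> = (\<integral>\<^sup>+x. ennreal (f x) \<partial>count_space A)"
    by (rule nn_integral_conv_infsetsum[symmetric, OF abs nn])
  finally show ?thesis .
next
  case True
  show ?thesis
  proof (rule ccontr)
    assume "(\<Sum>\<^sub>\<infinity>x\<in>A. ennreal (f x)) \<noteq> (\<integral>\<^sup>+x. ennreal (f x) \<partial>count_space A)"
    hence "(\<Sum>\<^sub>\<infinity>x\<in>A. ennreal (f x)) < \<top>" using True by (simp add: top.not_eq_extremum)
    then obtain C where C: "(\<Sum>\<^sub>\<infinity>x\<in>A. ennreal (f x)) = ennreal C" "C \<ge> 0"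
      by (cases "\<Sum>\<^sub>\<infinity>x\<in>A. ennreal (f x)") auto
    have bnd: "sum f X \<le> C" if "finite X" "X \<subseteq> A" for X
    proof -
      have "ennreal (sum f X) = sum (\<lambda>x. ennreal (f x)) X"
        using that nn by (intro sum_ennreal[symmetric]) auto
      also have "\<dots> \<le> (\<Sum>\<^sub>\<infinity>x\<in>A. ennreal (f x))"
        unfolding infsum_ennreal_eq_SUP_finite using that by (intro SUP_upper) auto
      finally show ?thesis using C by (auto simp add: ennreal_le_iff2 )
    qed
    have "bdd_above (sum (\<lambda>x. norm (f x)) ` {F. F\<subseteq>A \<and> finite F})"
      using bnd nn by (intro bdd_aboveI[where M=C]) (auto simp: subset_iff intro!: sum.cong)
    hence "Infinite_Sum.abs_summable_on f A" by (rule abs_summable_iff_bdd_above[THEN iffD2])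
    hence "Infinite_Set_Sum.abs_summable_on f A" by (rule abs_summable_equivalent[THEN iffD1])
    hence "(\<integral>\<^sup>+x. ennreal (f x) \<partial>count_space A) = ennreal (infsetsum f A)"
      using nn by (rule nn_integral_conv_infsetsum)
    thus False using True by simp
  qed
qed

lemma infsum_real_eq_nn_integral:
  fixes f :: "'a \<Rightarrow> real"
  assumes nn: "\<And>x. x \<in> A \<Longrightarrow> f x \<ge> 0"
    and fin: "(\<integral>\<^sup>+x. ennreal (f x) \<partial>count_space A) \<noteq> \<top>"
  shows "infsum f A = enn2real (\<integral>\<^sup>+x. ennreal (f x) \<partial>count_space A)"
proof -
  have int: "integrable (count_space A) f"
    using fin nn by (intro integrableI_nonneg) (auto simp: AE_count_space top.not_eq_extremum)
  hence abs: "Infinite_Set_Sum.abs_summable_on f A" by (simp add: abs_summable_on_def)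
  have "infsum f A = infsetsum f A" by (rule infsetsum_infsum[symmetric, OF abs])
  also have "\<dots> = enn2real (\<integral>\<^sup>+x. ennreal (f x) \<partial>count_space A)"
    using nn_integral_conv_infsetsum[OF abs nn] infsetsum_nonneg[of A f] nn by simp
  finally show ?thesis .
qed

section \<open>Distributions on pairs\<close>

lemma nn_integral_pmf_UNIV: "(\<integral>\<^sup>+x. ennreal (pmf p x) \<partial>count_space UNIV) = 1"
  by (simp add: nn_integral_pmf)

lemma nn_integral_count_singleton:
  "(\<integral>\<^sup>+x'. f x' * indicator {x} x' \<partial>count_space UNIV) = f x"
  using nn_integral_indicator_singleton[of x "count_space UNIV" f] by simp

lemma ennreal_pmf_map_fst:
  "ennreal (pmf (map_pmf fst p) x) = (\<integral>\<^sup>+y. ennreal (pmf p (x,y)) \<partial>count_space UNIV)"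
proof -
  have "ennreal (pmf (map_pmf fst p) x) = emeasure (measure_pmf p) (fst -` {x})"
    by (simp add: pmf_map measure_pmf.emeasure_eq_measure)
  also have "\<dots> = (\<integral>\<^sup>+xy. ennreal (pmf p xy) * indicator (fst -` {x}) xy \<partial>count_space UNIV)"
    by (simp add: nn_integral_pmf[symmetric] nn_integral_count_space_indicator)
  also have "\<dots> = (\<integral>\<^sup>+x'. \<integral>\<^sup>+y. ennreal (pmf p (x',y)) * indicator (fst -` {x}) (x',y) \<partial>count_space
      UNIV \<partial>count_space UNIV)"
    by (subst nn_integral_fst_count_space[symmetric]) simp
  also have "\<dots> = (\<integral>\<^sup>+x'. (\<integral>\<^sup>+y. ennreal (pmf p (x',y)) \<partial>count_space UNIV) * indicator {x} x'
      \<partial>count_space UNIV)"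
    by (intro nn_integral_cong) (auto simp: indicator_def)
  also have "\<dots> = (\<integral>\<^sup>+y. ennreal (pmf p (x,y)) \<partial>count_space UNIV)"
    by (rule nn_integral_count_singleton)
  finally show ?thesis .
qed

lemma pmf_le_pmf_map_snd: "pmf p (x,y) \<le> pmf (map_pmf snd p) y"
  by (simp add: pmf_map measure_pmf_single[symmetric] measure_pmf.finite_measure_mono)

lemma nn_integral_pmf_map_snd: "(\<integral>\<^sup>+y. ennreal (pmf (map_pmf snd p) y) * f y \<partial>count_space UNIV)
    = (\<integral>\<^sup>+xy. f (snd xy) \<partial>measure_pmf p)"
  by (simp add: nn_integral_measure_pmf[symmetric])

lemma nn_integral_measure_pmf_pair: "(\<integral>\<^sup>+x. \<integral>\<^sup>+y. ennreal (pmf p (x,y)) * g x y \<partial>count_space UNIV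
    \<partial>count_space UNIV)
   = (\<integral>\<^sup>+xy. g (fst xy) (snd xy) \<partial>measure_pmf p)"
  using nn_integral_fst_count_space[of "\<lambda>xy. ennreal (pmf p xy) * g (fst xy) (snd xy)"]
  by (simp add: nn_integral_measure_pmf)

lemma ennreal_pmf_map_eq_nn_integral:
  "ennreal (pmf (map_pmf f p) w) = (\<integral>\<^sup>+z. ennreal (pmf p z) * indicator (f -` {w}) z \<partial>count_space UNIV)"
  by (simp add: ennreal_pmf_map nn_integral_measure_pmf[symmetric])

lemma pmf_map_mixture:
  assumes a: "a \<ge> 0" and b: "b \<ge> 0" and mix: "\<And>z. pmf p z = a * pmf q z + b * pmf r z"
  shows "pmf (map_pmf f p) w = a * pmf (map_pmf f q) w + b * pmf (map_pmf f r) w"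
proof -
  have "ennreal (pmf (map_pmf f p) w) = (\<integral>\<^sup>+z. ennreal a * (ennreal (pmf q z) * indicator (f -` {w}) z)
      + ennreal b * (ennreal (pmf r z) * indicator (f -` {w}) z) \<partial>count_space UNIV)"
    unfolding ennreal_pmf_map_eq_nn_integral using a b
    by (intro nn_integral_cong) (simp add: mix ennreal_plus ennreal_mult distrib_left mult_ac)
  also have "\<dots> = ennreal (a * pmf (map_pmf f q) w + b * pmf (map_pmf f r) w)"
    using a b by (simp add: nn_integral_add nn_integral_cmult ennreal_pmf_map_eq_nn_integral
        ennreal_plus ennreal_mult)
  finally show ?thesis using a b by (subst (asm) ennreal_inj) auto
qed

lemma emeasure_pmf_ratio_less_le:
  fixes p q :: "'a pmf"
  assumes t: "t > 0"
  shows "emeasure (measure_pmf p) {x. t * pmf p x < pmf q x} \<le> ennreal (1 / t)"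
proof -
  let ?S = "{x. t * pmf p x < pmf q x}"
  have "emeasure (measure_pmf p) ?S = (\<integral>\<^sup>+x. ennreal (pmf p x) * indicator ?S x \<partial>count_space UNIV)"
    by (simp add: nn_integral_measure_pmf[symmetric])
  also have "\<dots> \<le> (\<integral>\<^sup>+x. ennreal (1 / t) * ennreal (pmf q x) \<partial>count_space UNIV)"
  proof (intro nn_integral_mono)
    fix x
    show "ennreal (pmf p x) * indicator ?S x \<le> ennreal (1 / t) * ennreal (pmf q x)"
    proof (cases "x \<in> ?S")
      case True
      hence "pmf p x \<le> 1 / t * pmf q x" using t by (simp add: field_simps)
      thus ?thesis using True t by (simp add: ennreal_mult[symmetric] ennreal_leI)
    qed simp
  qed
  also have "\<dots> = ennreal (1 / t)" by (simp add: nn_integral_cmult nn_integral_pmf_UNIV)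
  finally show ?thesis .
qed

lemma nn_integral_pmf_log_ratio_le:
  fixes p q :: "'a pmf"
  assumes c: "c > 0" and dom: "\<And>x. c * pmf p x \<le> pmf q x"
  shows "(\<integral>\<^sup>+x. ennreal (pmf p x) * ennreal (log 2 (pmf q x / (c * pmf p x))) \<partial>count_space UNIV)
    \<le> ennreal (1 / (c * ln 2))"
proof -
  have "(\<integral>\<^sup>+x. ennreal (pmf p x) * ennreal (log 2 (pmf q x / (c * pmf p x))) \<partial>count_space UNIV)
      \<le> (\<integral>\<^sup>+x. ennreal (1 / (c * ln 2)) * ennreal (pmf q x) \<partial>count_space UNIV)"
  proof (intro nn_integral_mono)
    fix x
    show "ennreal (pmf p x) * ennreal (log 2 (pmf q x / (c * pmf p x)))
      \<le> ennreal (1 / (c * ln 2)) * ennreal (pmf q x)"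
    proof (cases "pmf p x > 0")
      case False
      hence "pmf p x = 0" using pmf_nonneg[of p x] by linarith
      thus ?thesis by simp
    next
      case True
      define r where "r = pmf q x / (c * pmf p x)"
      have r1: "r \<ge> 1" using dom[of x] True c by (simp add: r_def field_simps)
      have "pmf p x * log 2 r = pmf p x * (ln r / ln 2)" by (simp add: log_def)
      also have "\<dots> \<le> pmf p x * (r / ln 2)"
        using ln_le_minus_one[of r] r1 by (intro mult_left_mono divide_right_mono) auto
      also have "\<dots> = 1 / (c * ln 2) * pmf q x" using True c by (simp add: r_def field_simps)
      finally show ?thesis using r1 c
        by (simp add: r_def ennreal_mult[symmetric] ennreal_leI)
    qed
  qed
  also have "\<dots> = ennreal (1 / (c * ln 2))" by (simp add: nn_integral_cmult nn_integral_pmf_UNIV)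
  finally show ?thesis .
qed

section \<open>Conditional information density and its quantiles\<close>

lemma PX_nonneg: "PX Q n x \<ge> 0" by (simp add: PX_def)

lemma PY_nonneg: "PY Q n y \<ge> 0" by (simp add: PY_def)

lemma PX_eq_0_if_not_pos: "\<not> PX Q n x > 0 \<Longrightarrow> PX Q n x = 0"
  using PX_nonneg[of Q n x] by linarith

lemma nn_integral_PX: "(\<integral>\<^sup>+x. ennreal (PX Q n x) \<partial>count_space UNIV) = 1"
  unfolding PX_def by (rule nn_integral_pmf_UNIV)

lemma ennreal_PX_eq_nn_integral: "ennreal (PX Q n x)
    = (\<integral>\<^sup>+y. ennreal (pmf (Q n) (x,y)) \<partial>count_space UNIV)"
  unfolding PX_def by (rule ennreal_pmf_map_fst)

lemma pmf_le_PY: "pmf (Q n) (x,y) \<le> PY Q n y" unfolding PY_def by (rule pmf_le_pmf_map_snd)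

text \<open>At pairs of probability zero the junk value \<open>log 2 0 = 0\<close> makes this vanish.\<close>

definition cond_info :: "('a, 'b) source \<Rightarrow> nat \<Rightarrow> 'a list \<Rightarrow> 'b list \<Rightarrow> real" where
  "cond_info Q n x y = log 2 (1 / condXY Q n x y)"

lemma cond_info_nonneg: "cond_info Q n x y \<ge> 0"
proof (cases "pmf (Q n) (x,y) = 0")
  case True thus ?thesis by (simp add: cond_info_def condXY_def log_def)
next
  case False
  hence p: "pmf (Q n) (x,y) > 0" by (simp add: less_le)
  have r: "pmf (Q n) (x,y) \<le> PY Q n y" by (rule pmf_le_PY)
  with p have "1 \<le> 1 / condXY Q n x y" by (simp add: condXY_def field_simps)
  thus ?thesis unfolding cond_info_def log_def by (intro divide_nonneg_pos ln_ge_zero) auto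
qed

lemma cond_info_eq_log_diff: assumes "pmf (Q n) (x,y) > 0"
  shows "cond_info Q n x y = log 2 (PY Q n y) - log 2 (pmf (Q n) (x,y))"
proof -
  have "PY Q n y > 0" using assms pmf_le_PY[of Q n x y] by linarith
  thus ?thesis using assms by (simp add: cond_info_def condXY_def log_divide)
qed

text \<open>The conditional tail probability in the definition of \<open>hbar\<close>, multiplied by \<open>P_X(x)\<close> to avoid
  the division.\<close>

definition info_tail :: "('a, 'b) source \<Rightarrow> nat \<Rightarrow> 'a list \<Rightarrow> real \<Rightarrow> ennreal" where
  "info_tail Q n x a = (\<integral>\<^sup>+y. ennreal (pmf (Q n) (x,y)) * indicator {y. a < cond_info Q n x y} y
      \<partial>count_space UNIV)"

lemma info_tail_le_PX: "info_tail Q n x a \<le> ennreal (PX Q n x)"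
  unfolding info_tail_def ennreal_PX_eq_nn_integral
      by (intro nn_integral_mono) (auto simp: indicator_def)

lemma info_tail_finite: "info_tail Q n x a \<noteq> \<top>"
  using info_tail_le_PX[of Q n x a] by (auto simp: top_unique)

lemma info_tail_antimono: "a \<le> a' \<Longrightarrow> info_tail Q n x a' \<le> info_tail Q n x a"
  unfolding info_tail_def by (intro nn_integral_mono) (auto simp: indicator_def intro!: mult_left_mono)

lemma info_tail_neg: "a < 0 \<Longrightarrow> info_tail Q n x a = ennreal (PX Q n x)"
  unfolding info_tail_def ennreal_PX_eq_nn_integral using cond_info_nonneg[of Q n x]
  by (intro nn_integral_cong) (auto simp: indicator_def less_le_trans)

lemma infsum_condYX_eq_info_tail:
  assumes q: "PX Q n x > 0"
  shows "(\<Sum>\<^sub>\<infinity>y\<in>{y. a < cond_info Q n x y}. condYX Q n x y) = enn2real (info_tail Q n x a) / PX Q n x"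
proof -
  let ?S = "{y. a < cond_info Q n x y}"
  have nn: "condYX Q n x y \<ge> 0" for y using q by (simp add: condYX_def)
  have c: "condYX Q n x y = 1 / PX Q n x * pmf (Q n) (x,y)" for y by (simp add: condYX_def)
  have "(\<integral>\<^sup>+y. ennreal (condYX Q n x y) \<partial>count_space ?S) =
        (\<integral>\<^sup>+y. ennreal (1 / PX Q n x) * (ennreal (pmf (Q n) (x,y)) * indicator ?S y) \<partial>count_space UNIV)"
  proof (subst nn_integral_count_space_indicator, simp, intro nn_integral_cong)
    fix y
    show "ennreal (condYX Q n x y) * indicator ?S y
        = ennreal (1 / PX Q n x) * (ennreal (pmf (Q n) (x,y)) * indicator ?S y)"
      unfolding c using q by (subst ennreal_mult) (auto simp: mult.assoc)
  qed
  also have "\<dots> = ennreal (1 / PX Q n x) * info_tail Q n x a"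
    unfolding info_tail_def by (rule nn_integral_cmult) simp
  finally have eq: "(\<integral>\<^sup>+y. ennreal (condYX Q n x y) \<partial>count_space ?S)
      = ennreal (1 / PX Q n x) * info_tail Q n x a" .
  have fin: "(\<integral>\<^sup>+y. ennreal (condYX Q n x y) \<partial>count_space ?S) \<noteq> \<top>"
    unfolding eq using info_tail_finite[of Q n x a] by (simp add: ennreal_mult_eq_top_iff del: ennreal_1)
  have "(\<Sum>\<^sub>\<infinity>y\<in>?S. condYX Q n x y) = enn2real (ennreal (1 / PX Q n x) * info_tail Q n x a)"
    by (subst infsum_real_eq_nn_integral[OF nn fin]) (simp add: eq)
  also have "\<dots> = enn2real (info_tail Q n x a) / PX Q n x"
    using q by (simp add: enn2real_mult)
  finally show ?thesis .
qed

lemma hbar_eq_Inf_info_tail: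
  assumes q: "PX Q n x > 0" and e: "\<epsilon> \<ge> 0"
  shows "hbar Q n \<epsilon> x = Inf {a. info_tail Q n x a \<le> ennreal (\<epsilon> * PX Q n x)}"
proof -
  have "(\<Sum>\<^sub>\<infinity>y\<in>{y. a < cond_info Q n x y}. condYX Q n x y) \<le> \<epsilon> \<longleftrightarrow>
        info_tail Q n x a \<le> ennreal (\<epsilon> * PX Q n x)" for a
  proof -
    have "enn2real (info_tail Q n x a) \<le> \<epsilon> * PX Q n x \<longleftrightarrow> info_tail Q n x a \<le> ennreal (\<epsilon> * PX Q n x)"
      using info_tail_finite[of Q n x a] e q by (cases "info_tail Q n x a") auto
    thus ?thesis unfolding infsum_condYX_eq_info_tail[OF q] using q by (simp add: field_simps)
  qed
  thus ?thesis unfolding hbar_def cond_info_def[symmetric] by simp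
qed

lemma nonneg_if_info_tail_le:
  assumes q: "PX Q n x > 0" and e: "\<epsilon> < 1" and a: "info_tail Q n x a \<le> ennreal (\<epsilon> * PX Q n x)"
  shows "a \<ge> 0"
proof (rule ccontr)
  assume "\<not> a \<ge> 0"
  hence "info_tail Q n x a = ennreal (PX Q n x)" by (intro info_tail_neg) simp
  with a have "ennreal (PX Q n x) \<le> ennreal (\<epsilon> * PX Q n x)" by simp
  hence "PX Q n x \<le> \<epsilon> * PX Q n x" using q by (simp add: ennreal_le_iff2)
  thus False using q e by (simp add: mult_le_cancel_right1 not_le)
qed

lemma ex_info_tail_le:
  assumes q: "PX Q n x > 0" and e: "\<epsilon> > 0"
  shows "\<exists>a. info_tail Q n x a \<le> ennreal (\<epsilon> * PX Q n x)"
proof -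
  define f where "f = (\<lambda>(k::nat) y. ennreal (pmf (Q n) (x,y)) * indicator
      {y. real k < cond_info Q n x y} y)"
  have anti: "antimono_on UNIV f"
    unfolding f_def by (auto simp: monotone_on_def le_fun_def indicator_def intro!: mult_left_mono)
  have fin: "integral\<^sup>N (count_space UNIV) (f 0) < \<infinity>"
    using info_tail_finite[of Q n x 0] by (simp add: f_def info_tail_def top.not_eq_extremum)
  have "(\<integral>\<^sup>+y. (INF i. f i y) \<partial>count_space UNIV) = (INF i. integral\<^sup>N (count_space UNIV) (f i))"
    by (rule nn_integral_monotone_convergence_INF_decseq[OF anti _ fin]) simp
  moreover have "(INF i. f i y) = 0" for y
  proof -
    obtain k::nat where "cond_info Q n x y < real k" using reals_Archimedean2 by blast
    hence "f k y = 0" by (simp add: f_def indicator_def)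
    hence "(INF i. f i y) \<le> 0" by (metis INF_lower UNIV_I)
    thus ?thesis by simp
  qed
  ultimately have "(INF i. info_tail Q n x (real i)) = 0" by (simp add: f_def info_tail_def)
  moreover have "0 < ennreal (\<epsilon> * PX Q n x)" using q e by simp
  ultimately obtain i where "info_tail Q n x (real i) < ennreal (\<epsilon> * PX Q n x)"
    by (metis INF_less_iff)
  thus ?thesis by (intro exI[of _ "real i"]) simp
qed

lemma hbar_le_if_info_tail_le:
  assumes q: "PX Q n x > 0" and e: "0 \<le> \<epsilon>" "\<epsilon> < 1" and a: "info_tail Q n x a \<le> ennreal (\<epsilon> * PX Q n x)"
  shows "hbar Q n \<epsilon> x \<le> a"
  unfolding hbar_eq_Inf_info_tail[OF q e(1)]
  by (rule cInf_lower) (use a nonneg_if_info_tail_le[OF q e(2)] in \<open>auto intro!: bdd_belowI[of _ 0]\<close>)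

lemma hbar_nonneg:
  assumes q: "PX Q n x > 0" and e: "0 < \<epsilon>" "\<epsilon> < 1"
  shows "hbar Q n \<epsilon> x \<ge> 0"
  unfolding hbar_eq_Inf_info_tail[OF q less_imp_le[OF e(1)]]
  by (rule cInf_greatest) (use ex_info_tail_le[OF q e(1)] nonneg_if_info_tail_le[OF q e(2)] in auto)

lemma info_tail_le_if_hbar_less:
  assumes q: "PX Q n x > 0" and e: "0 < \<epsilon>" "\<epsilon> < 1" and a: "hbar Q n \<epsilon> x < a"
  shows "info_tail Q n x a \<le> ennreal (\<epsilon> * PX Q n x)"
proof -
  let ?T = "{a. info_tail Q n x a \<le> ennreal (\<epsilon> * PX Q n x)}"
  have ne: "?T \<noteq> {}" using ex_info_tail_le[OF q e(1)] by auto
  have bdd: "bdd_below ?T" using nonneg_if_info_tail_le[OF q e(2)] by (auto intro!: bdd_belowI[of _ 0])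
  from a have "Inf ?T < a" unfolding hbar_eq_Inf_info_tail[OF q less_imp_le[OF e(1)]] .
  then obtain a' where "a' \<in> ?T" "a' < a" using cInf_less_iff[OF ne bdd] by blast
  thus ?thesis using info_tail_antimono[of a' a Q n x] by auto
qed

lemma hbar_antimono:
  assumes q: "PX Q n x > 0" and e: "0 < \<epsilon>" "\<epsilon> \<le> \<epsilon>'" "\<epsilon>' < 1"
  shows "hbar Q n \<epsilon>' x \<le> hbar Q n \<epsilon> x"
proof -
  have "hbar Q n \<epsilon>' x \<le> hbar Q n \<epsilon> x + 0"
  proof (rule le_add_if_le_all_greater)
    fix a assume "hbar Q n \<epsilon> x < a"
    hence "info_tail Q n x a \<le> ennreal (\<epsilon> * PX Q n x)"
        using info_tail_le_if_hbar_less[OF q e(1)] e by auto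
    also have "\<dots> \<le> ennreal (\<epsilon>' * PX Q n x)" using e q by (intro ennreal_leI mult_right_mono) auto
    finally show "hbar Q n \<epsilon>' x \<le> a + 0" using hbar_le_if_info_tail_le[OF q _ e(3)] e by auto
  qed
  thus ?thesis by simp
qed

lemma info_tail_le_info_integral:
  assumes t: "t > 0"
  shows "info_tail Q n x t \<le>
    ennreal (1/t) * (\<integral>\<^sup>+y. ennreal (pmf (Q n) (x,y)) * ennreal (cond_info Q n x y) \<partial>count_space UNIV)"
proof -
  have "info_tail Q n x t \<le>
      (\<integral>\<^sup>+y. ennreal (1/t) * (ennreal (pmf (Q n) (x,y)) * ennreal (cond_info Q n x y))
          \<partial>count_space UNIV)"
    unfolding info_tail_def
  proof (intro nn_integral_mono)
    fix y
    show "ennreal (pmf (Q n) (x,y)) * indicator {y. t < cond_info Q n x y} y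
        \<le> ennreal (1/t) * (ennreal (pmf (Q n) (x,y)) * ennreal (cond_info Q n x y))"
    proof (cases "t < cond_info Q n x y")
      case True
      hence "1 \<le> ennreal (1/t) * ennreal (cond_info Q n x y)"
        using t by (subst ennreal_mult[symmetric]) (auto simp: field_simps)
      hence "ennreal (pmf (Q n) (x,y)) * 1
          \<le> ennreal (pmf (Q n) (x,y)) * (ennreal (1/t) * ennreal (cond_info Q n x y))"
        by (rule mult_left_mono) simp
      thus ?thesis using True by (simp add: mult_ac)
    qed simp
  qed
  thus ?thesis by (simp add: nn_integral_cmult)
qed

text \<open>Markov's inequality: the \<open>\<epsilon>\<close>-quantile of a nonnegative variable is at most its mean
  divided by \<open>\<epsilon>\<close>.\<close>

lemma PX_hbar_le_info_integral:
  assumes q: "PX Q n x > 0" and e: "0 < \<epsilon>" "\<epsilon> < 1"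
  shows "ennreal (PX Q n x * hbar Q n \<epsilon> x) \<le>
         ennreal (1/\<epsilon>) * (\<integral>\<^sup>+y. ennreal (pmf (Q n) (x,y)) * ennreal (cond_info Q n x y)
             \<partial>count_space UNIV)"
    (is "_ \<le> _ * ?I")
proof (cases "?I = \<top>")
  case True thus ?thesis using e by (simp add: ennreal_mult_top)
next
  case False
  then obtain i where i: "?I = ennreal i" "i \<ge> 0" by (cases ?I) auto
  have epos: "\<epsilon> * PX Q n x > 0" using e q by simp
  have "hbar Q n \<epsilon> x \<le> i / (\<epsilon> * PX Q n x) + 0"
  proof (rule le_add_if_le_all_greater)
    fix t assume t: "i / (\<epsilon> * PX Q n x) < t"
    have tpos: "t > 0" using t i(2) epos by (smt (verit) divide_nonneg_pos)
    have "info_tail Q n x t \<le> ennreal (1/t) * ennreal i"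
      using info_tail_le_info_integral[OF tpos, of Q n x] by (simp add: i)
    also have "\<dots> \<le> ennreal (\<epsilon> * PX Q n x)"
      using t tpos epos i by (simp add: ennreal_mult[symmetric] ennreal_leI field_simps)
    finally show "hbar Q n \<epsilon> x \<le> t + 0" using hbar_le_if_info_tail_le[OF q _ e(2)] e by auto
  qed
  hence "PX Q n x * hbar Q n \<epsilon> x \<le> i / \<epsilon>" using q e by (simp add: field_simps)
  hence "ennreal (PX Q n x * hbar Q n \<epsilon> x) \<le> ennreal (i / \<epsilon>)" by (rule ennreal_leI)
  also have "\<dots> = ennreal (1/\<epsilon>) * ?I" using i e by (simp add: ennreal_mult[symmetric])
  finally show ?thesis .
qed

lemma Hs_eps_eq_nn_integral:
  assumes e: "0 < \<epsilon>" "\<epsilon> < 1"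
  shows "Hs_eps Q \<epsilon> n = (\<integral>\<^sup>+x. ennreal (PX Q n x * hbar Q n \<epsilon> x) \<partial>count_space UNIV)"
proof -
  have nn: "PX Q n x * hbar Q n \<epsilon> x \<ge> 0" for x
  proof (cases "PX Q n x > 0")
    case True thus ?thesis using hbar_nonneg[OF True e] by simp
  next
    case False
    hence "PX Q n x = 0" using pmf_nonneg[of "map_pmf fst (Q n)" x] by (simp add: PX_def)
    thus ?thesis by simp
  qed
  show ?thesis unfolding Hs_eps_def by (rule infsum_ennreal_eq_nn_integral) (use nn in auto)
qed

lemma restricted_Hs_eps_le_info:
  assumes e: "0 < \<epsilon>" "\<epsilon> < 1"
  shows "(\<integral>\<^sup>+x. indicator T x * ennreal (PX Q n x * hbar Q n \<epsilon> x) \<partial>count_space UNIV) \<le>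
    ennreal (1/\<epsilon>) * (\<integral>\<^sup>+xy. indicator T (fst xy) * ennreal (cond_info Q n (fst xy) (snd xy))
        \<partial>measure_pmf (Q n))"
proof -
  have pw: "indicator T x * ennreal (PX Q n x * hbar Q n \<epsilon> x) \<le>
    ennreal (1/\<epsilon>) * (\<integral>\<^sup>+y. ennreal (pmf (Q n) (x,y)) *
        (indicator T x * ennreal (cond_info Q n x y)) \<partial>count_space UNIV)" for x
  proof (cases "PX Q n x > 0")
    case False thus ?thesis using PX_eq_0_if_not_pos[OF False] by simp
  next
    case True
    have "indicator T x * ennreal (PX Q n x * hbar Q n \<epsilon> x) \<le> indicator T x * (ennreal (1/\<epsilon>) *
         (\<integral>\<^sup>+y. ennreal (pmf (Q n) (x,y)) * ennreal (cond_info Q n x y) \<partial>count_space UNIV))"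
      by (intro mult_left_mono PX_hbar_le_info_integral[OF True e]) simp
    also have "\<dots> = ennreal (1/\<epsilon>) * (indicator T x *
        (\<integral>\<^sup>+y. ennreal (pmf (Q n) (x,y)) * ennreal (cond_info Q n x y) \<partial>count_space UNIV))"
      by (simp add: mult_ac)
    also have "\<dots> = ennreal (1/\<epsilon>) * (\<integral>\<^sup>+y. ennreal (pmf (Q n) (x,y)) *
        (indicator T x * ennreal (cond_info Q n x y)) \<partial>count_space UNIV)"
      by (subst nn_integral_cmult[symmetric]) (auto simp: mult_ac)
    finally show ?thesis .
  qed
  have "(\<integral>\<^sup>+x. indicator T x * ennreal (PX Q n x * hbar Q n \<epsilon> x) \<partial>count_space UNIV) \<le>
     (\<integral>\<^sup>+x. ennreal (1/\<epsilon>) * (\<integral>\<^sup>+y. ennreal (pmf (Q n) (x,y)) *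
         (indicator T x * ennreal (cond_info Q n x y)) \<partial>count_space UNIV) \<partial>count_space UNIV)"
    by (intro nn_integral_mono pw)
  also have "\<dots> = ennreal (1/\<epsilon>) * (\<integral>\<^sup>+xy. indicator T (fst xy) * ennreal
      (cond_info Q n (fst xy) (snd xy)) \<partial>measure_pmf (Q n))"
    by (simp add: nn_integral_cmult nn_integral_measure_pmf_pair[where g="\<lambda>x y. indicator T x *
        ennreal (cond_info Q n x y)"])
  finally show ?thesis .
qed

definition Hs_eps_cross :: "('a, 'b) source \<Rightarrow> ('a, 'b) source \<Rightarrow> nat \<Rightarrow> real \<Rightarrow> ennreal" where
  "Hs_eps_cross Q M n \<epsilon> = (\<integral>\<^sup>+x. ennreal (PX Q n x * hbar M n \<epsilon> x) \<partial>count_space UNIV)"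

section \<open>Sublinear sequences and uniform integrability\<close>

definition sublinear :: "(nat \<Rightarrow> ennreal) \<Rightarrow> bool" where
  "sublinear f \<longleftrightarrow> (\<forall>\<zeta>>0. eventually (\<lambda>n. f n \<le> ennreal (real n * \<zeta>)) sequentially)"

lemma sublinearD: "sublinear f \<Longrightarrow> \<zeta> > 0 \<Longrightarrow> eventually (\<lambda>n. f n \<le> ennreal (real n * \<zeta>)) sequentially"
  by (simp add: sublinear_def)

lemma sublinear_add: assumes "sublinear f" "sublinear g" shows "sublinear (\<lambda>n. f n + g n)"
  unfolding sublinear_def
proof (intro allI impI)
  fix \<zeta> :: real assume z: "\<zeta> > 0"
  have "eventually (\<lambda>n. f n \<le> ennreal (real n * (\<zeta>/2)) \<and> g n \<le> ennreal (real n * (\<zeta>/2))) sequentially"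
    using sublinearD[OF assms(1), of "\<zeta>/2"] sublinearD[OF assms(2), of "\<zeta>/2"] z
        by (auto intro: eventually_conj)
  thus "eventually (\<lambda>n. f n + g n \<le> ennreal (real n * \<zeta>)) sequentially"
  proof (rule eventually_mono)
    fix n assume "f n \<le> ennreal (real n * (\<zeta>/2)) \<and> g n \<le> ennreal (real n * (\<zeta>/2))"
    hence "f n + g n \<le> ennreal (real n * (\<zeta>/2)) + ennreal (real n * (\<zeta>/2))" by (intro add_mono) auto
    also have "\<dots> = ennreal (real n * \<zeta>)" using z by (simp add: ennreal_plus[symmetric] del: ennreal_plus)
    finally show "f n + g n \<le> ennreal (real n * \<zeta>)" .
  qed
qed

lemma sublinear_cmult: assumes "sublinear f" "c \<ge> 0" shows "sublinear (\<lambda>n. ennreal c * f n)"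
  unfolding sublinear_def
proof (intro allI impI)
  fix \<zeta> :: real assume z: "\<zeta> > 0"
  have "eventually (\<lambda>n. f n \<le> ennreal (real n * (\<zeta>/(c+1)))) sequentially"
    using sublinearD[OF assms(1), of "\<zeta>/(c+1)"] z assms(2) by auto
  thus "eventually (\<lambda>n. ennreal c * f n \<le> ennreal (real n * \<zeta>)) sequentially"
  proof (rule eventually_mono)
    fix n assume h: "f n \<le> ennreal (real n * (\<zeta>/(c+1)))"
    have "ennreal c * f n \<le> ennreal c * ennreal (real n * (\<zeta>/(c+1)))" by (intro mult_left_mono h) auto
    also have "\<dots> = ennreal (c * (real n * (\<zeta>/(c+1))))" using assms z by (subst ennreal_mult) auto
    also have "\<dots> \<le> ennreal (real n * \<zeta>)"
    proof (rule ennreal_leI)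
      have "c / (c+1) \<le> 1" using assms by simp
      hence "(real n * \<zeta>) * (c / (c+1)) \<le> (real n * \<zeta>) * 1" using z by (intro mult_left_mono) auto
      thus "c * (real n * (\<zeta>/(c+1))) \<le> real n * \<zeta>" by (simp add: field_simps)
    qed
    finally show "ennreal c * f n \<le> ennreal (real n * \<zeta>)" .
  qed
qed

lemma sublinear_mono: assumes "sublinear f" "eventually (\<lambda>n. g n \<le> f n) sequentially" shows "sublinear g"
  unfolding sublinear_def
proof (intro allI impI)
  fix \<zeta> :: real assume z: "\<zeta> > 0"
  show "eventually (\<lambda>n. g n \<le> ennreal (real n * \<zeta>)) sequentially"
    using eventually_conj[OF sublinearD[OF assms(1) z] assms(2)] by (rule eventually_mono) auto
qed

lemma sublinear_const: "sublinear (\<lambda>n. ennreal K)"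
  unfolding sublinear_def
proof (intro allI impI)
  fix \<zeta> :: real assume z: "\<zeta> > 0"
  obtain N :: nat where N: "K / \<zeta> < real N" using reals_Archimedean2 by blast
  show "eventually (\<lambda>n. ennreal K \<le> ennreal (real n * \<zeta>)) sequentially"
    unfolding eventually_sequentially
  proof (intro exI[of _ N] allI impI ennreal_leI)
    fix n assume "N \<le> n"
    hence "K / \<zeta> < real n" using N by linarith
    thus "K \<le> real n * \<zeta>" using z by (simp add: field_simps)
  qed
qed

lemma Zdist_tail_eq_nn_integral:
  "(\<Sum>\<^sub>\<infinity> z\<in>{z. \<bar>z\<bar> \<ge> u}. ennreal (pmf (Zdist Q n) z * \<bar>z\<bar>)) =
   (\<integral>\<^sup>+xy. ennreal \<bar>cond_info Q n (fst xy) (snd xy) / real n\<bar> * indicator {z. \<bar>z\<bar> \<ge> u}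
       (cond_info Q n (fst xy) (snd xy) / real n) \<partial>measure_pmf (Q n))"
proof -
  have "(\<Sum>\<^sub>\<infinity> z\<in>{z. \<bar>z\<bar> \<ge> u}. ennreal (pmf (Zdist Q n) z * \<bar>z\<bar>)) =
        (\<integral>\<^sup>+z. ennreal (pmf (Zdist Q n) z * \<bar>z\<bar>) \<partial>count_space {z. \<bar>z\<bar> \<ge> u})"
    by (rule infsum_ennreal_eq_nn_integral) simp
  also have "\<dots> = (\<integral>\<^sup>+z. ennreal (pmf (Zdist Q n) z) * (ennreal \<bar>z\<bar> * indicator {z. \<bar>z\<bar> \<ge> u} z)
      \<partial>count_space UNIV)"
    by (subst nn_integral_count_space_indicator)
        (auto intro!: nn_integral_cong simp: ennreal_mult mult.assoc)
  also have "\<dots> = (\<integral>\<^sup>+z. ennreal \<bar>z\<bar> * indicator {z. \<bar>z\<bar> \<ge> u} z \<partial>measure_pmf (Zdist Q n))"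
    by (simp add: nn_integral_measure_pmf)
  also have "\<dots> = (\<integral>\<^sup>+xy. ennreal \<bar>cond_info Q n (fst xy) (snd xy) / real n\<bar> * indicator
      {z. \<bar>z\<bar> \<ge> u} (cond_info Q n (fst xy) (snd xy) / real n) \<partial>measure_pmf (Q n))"
    unfolding Zdist_def by (simp add: case_prod_beta cond_info_def)
  finally show ?thesis .
qed

text \<open>Uniform integrability in \<open>\<epsilon>\<close>-\<open>\<delta>\<close> form: off the tail \<open>|Z_n| \<ge> u\<close> the information density is at
  most \<open>n u\<close>.\<close>

lemma uniformly_integrable_info_bound:
  assumes ui: "uniformly_integrable Q" and z: "\<zeta> > 0"
  shows "\<exists>u>0. \<forall>n\<ge>1. \<forall>S. (\<integral>\<^sup>+xy. indicator S xy * ennreal (cond_info Q n (fst xy) (snd xy))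
      \<partial>measure_pmf (Q n))
            \<le> ennreal (real n) * (ennreal u * emeasure (measure_pmf (Q n)) S + ennreal \<zeta>)"
proof -
  let ?F = "\<lambda>u::real. SUP n\<in>{1..}. (\<Sum>\<^sub>\<infinity> z\<in>{z. \<bar>z\<bar> \<ge> u}. ennreal (pmf (Zdist Q n) z * \<bar>z\<bar>))"
  have "(?F \<longlongrightarrow> 0) at_top" using ui unfolding uniformly_integrable_def .
  hence "eventually (\<lambda>u. ?F u < ennreal \<zeta>) at_top" using z by (intro order_tendstoD(2)) auto
  then obtain U where U: "\<And>u. u \<ge> U \<Longrightarrow> ?F u < ennreal \<zeta>" by (auto simp: eventually_at_top_linorder)
  define u where "u = max U 1"
  have upos: "u > 0" by (simp add: u_def)
  have Fu: "?F u < ennreal \<zeta>" using U[of u] by (simp add: u_def del: max_def)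
  show ?thesis
  proof (intro exI[of _ u] conjI allI impI upos)
    fix n :: nat and S assume n: "n \<ge> 1"
    let ?Z = "\<lambda>xy. cond_info Q n (fst xy) (snd xy) / real n"
    have tl: "(\<integral>\<^sup>+xy. ennreal \<bar>?Z xy\<bar> * indicator {z. \<bar>z\<bar> \<ge> u} (?Z xy) \<partial>measure_pmf (Q n)) \<le> ennreal \<zeta>"
    proof -
      have "(\<integral>\<^sup>+xy. ennreal \<bar>?Z xy\<bar> * indicator {z. \<bar>z\<bar> \<ge> u} (?Z xy) \<partial>measure_pmf (Q n))
          = (\<Sum>\<^sub>\<infinity> z\<in>{z. \<bar>z\<bar> \<ge> u}. ennreal (pmf (Zdist Q n) z * \<bar>z\<bar>))"
        by (rule Zdist_tail_eq_nn_integral[symmetric])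
      also have "\<dots> \<le> ?F u" using n by (intro SUP_upper) auto
      finally show ?thesis using Fu by simp
    qed
    have pw: "indicator S xy * ennreal (cond_info Q n (fst xy) (snd xy)) \<le>
          ennreal (real n) * (ennreal u * indicator S xy
              + ennreal \<bar>?Z xy\<bar> * indicator {z. \<bar>z\<bar> \<ge> u} (?Z xy))" for xy
      by (rule indicator_mult_le_truncation[OF n cond_info_nonneg less_imp_le[OF upos]])
    have "(\<integral>\<^sup>+xy. indicator S xy * ennreal (cond_info Q n (fst xy) (snd xy)) \<partial>measure_pmf (Q n))
        \<le> (\<integral>\<^sup>+xy. ennreal (real n) * (ennreal u * indicator S xy
            + ennreal \<bar>?Z xy\<bar> * indicator {z. \<bar>z\<bar> \<ge> u} (?Z xy)) \<partial>measure_pmf (Q n))"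
      by (intro nn_integral_mono pw)
    also have "\<dots> = ennreal (real n) * (ennreal u * emeasure (measure_pmf (Q n)) S +
        (\<integral>\<^sup>+xy. ennreal \<bar>?Z xy\<bar> * indicator {z. \<bar>z\<bar> \<ge> u} (?Z xy) \<partial>measure_pmf (Q n)))"
      by (simp add: nn_integral_cmult nn_integral_add nn_integral_cmult_indicator)
    also have "\<dots> \<le> ennreal (real n) * (ennreal u * emeasure (measure_pmf (Q n)) S + ennreal \<zeta>)"
      by (intro mult_left_mono add_left_mono tl) auto
    finally show "(\<integral>\<^sup>+xy. indicator S xy * ennreal (cond_info Q n (fst xy) (snd xy)) \<partial>measure_pmf (Q n))
            \<le> ennreal (real n) * (ennreal u * emeasure (measure_pmf (Q n)) S + ennreal \<zeta>)" .
  qed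
qed

lemma uniformly_integrable_sublinear:
  assumes ui: "uniformly_integrable Q" and S: "(\<lambda>n. measure (measure_pmf (Q n)) (S n)) \<longlonglongrightarrow> 0"
  shows "sublinear (\<lambda>n. \<integral>\<^sup>+xy. indicator (S n) xy * ennreal (cond_info Q n (fst xy) (snd xy))
      \<partial>measure_pmf (Q n))"
  unfolding sublinear_def
proof (intro allI impI)
  fix \<zeta> :: real assume z: "\<zeta> > 0"
  obtain u where u: "u > 0" and bnd: "\<And>n S. n \<ge> 1
      \<Longrightarrow> (\<integral>\<^sup>+xy. indicator S xy * ennreal (cond_info Q n (fst xy) (snd xy)) \<partial>measure_pmf (Q n))
            \<le> ennreal (real n) * (ennreal u * emeasure (measure_pmf (Q n)) S + ennreal (\<zeta>/2))"
    using uniformly_integrable_info_bound[OF ui, of "\<zeta>/2"] z by auto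
  have "eventually (\<lambda>n. measure (measure_pmf (Q n)) (S n) < \<zeta> / (2*u)) sequentially"
    using S z u by (intro order_tendstoD(2)) auto
  moreover have "eventually (\<lambda>n. n \<ge> 1) sequentially" by (rule eventually_ge_at_top)
  ultimately show "eventually (\<lambda>n. (\<integral>\<^sup>+xy. indicator (S n) xy * ennreal
      (cond_info Q n (fst xy) (snd xy)) \<partial>measure_pmf (Q n)) \<le> ennreal (real n * \<zeta>)) sequentially"
  proof (eventually_elim)
    case (elim n)
    have m: "measure (measure_pmf (Q n)) (S n) \<ge> 0" by simp
    have "(\<integral>\<^sup>+xy. indicator (S n) xy * ennreal (cond_info Q n (fst xy) (snd xy)) \<partial>measure_pmf (Q n))
        \<le> ennreal (real n) * (ennreal u * ennreal (measure (measure_pmf (Q n)) (S n)) + ennreal (\<zeta>/2))"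
      using bnd[OF elim(2), of "S n"] by (simp add: measure_pmf.emeasure_eq_measure)
    also have "\<dots> = ennreal (real n * (u * measure (measure_pmf (Q n)) (S n) + \<zeta>/2))"
      using u z m by (simp add: ennreal_mult ennreal_plus)
    also have "\<dots> \<le> ennreal (real n * \<zeta>)"
    proof (rule ennreal_leI)
      have "u * measure (measure_pmf (Q n)) (S n) \<le> u * (\<zeta> / (2*u))" using elim(1) u
          by (intro mult_left_mono) auto
      hence "u * measure (measure_pmf (Q n)) (S n) + \<zeta>/2 \<le> \<zeta>" using u by simp
      thus "real n * (u * measure (measure_pmf (Q n)) (S n) + \<zeta>/2) \<le> real n * \<zeta>"
          by (intro mult_left_mono) auto
    qed
    finally show ?case .
  qed
qed

lemma uniformly_integrable_linear_bound:
  assumes ui: "uniformly_integrable Q"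
  shows "\<exists>C\<ge>0. \<forall>n\<ge>1. (\<integral>\<^sup>+xy. ennreal (cond_info Q n (fst xy) (snd xy)) \<partial>measure_pmf (Q n))
      \<le> ennreal (real n * C)"
proof -
  obtain u where u: "u > 0" and bnd: "\<And>n S. n \<ge> 1
      \<Longrightarrow> (\<integral>\<^sup>+xy. indicator S xy * ennreal (cond_info Q n (fst xy) (snd xy)) \<partial>measure_pmf (Q n))
            \<le> ennreal (real n) * (ennreal u * emeasure (measure_pmf (Q n)) S + ennreal 1)"
    using uniformly_integrable_info_bound[OF ui, of 1] by auto
  show ?thesis
  proof (intro exI[of _ "u + 1"] conjI allI impI)
    fix n :: nat assume n: "n \<ge> 1"
    have "(\<integral>\<^sup>+xy. ennreal (cond_info Q n (fst xy) (snd xy)) \<partial>measure_pmf (Q n))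
        \<le> ennreal (real n) * (ennreal u * 1 + ennreal 1)"
      using bnd[OF n, of UNIV] by simp
    also have "\<dots> = ennreal (real n * (u + 1))" using u by (simp add: ennreal_mult ennreal_plus)
    finally show "(\<integral>\<^sup>+xy. ennreal (cond_info Q n (fst xy) (snd xy)) \<partial>measure_pmf (Q n))
        \<le> ennreal (real n * (u + 1))" .
  qed (use u in auto)
qed

lemma sublinear_exp_decay_info:
  assumes ui: "uniformly_integrable Q" and g: "\<gamma> > 0"
  shows "sublinear (\<lambda>n. ennreal (2 powr (-(real n * \<gamma>))) *
      (\<integral>\<^sup>+xy. ennreal (cond_info Q n (fst xy) (snd xy)) \<partial>measure_pmf (Q n)))"
  unfolding sublinear_def
proof (intro allI impI)
  fix \<zeta> :: real assume z: "\<zeta> > 0"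
  obtain C where C: "C \<ge> 0" "\<And>n. n \<ge> 1 \<Longrightarrow> (\<integral>\<^sup>+xy. ennreal (cond_info Q n (fst xy) (snd xy))
      \<partial>measure_pmf (Q n)) \<le> ennreal (real n * C)"
    using uniformly_integrable_linear_bound[OF ui] by auto
  have "eventually (\<lambda>n. 2 powr (-(real n * \<gamma>)) < \<zeta> / (C + 1)) sequentially"
    using powr_neg_linear_tendsto_zero[OF g] z C by (intro order_tendstoD(2)) auto
  moreover have "eventually (\<lambda>n. n \<ge> 1) sequentially" by (rule eventually_ge_at_top)
  ultimately show "eventually (\<lambda>n. ennreal (2 powr (-(real n * \<gamma>))) *
      (\<integral>\<^sup>+xy. ennreal (cond_info Q n (fst xy) (snd xy)) \<partial>measure_pmf (Q n))
      \<le> ennreal (real n * \<zeta>)) sequentially"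
  proof eventually_elim
    case (elim n)
    have "ennreal (2 powr (-(real n * \<gamma>))) * (\<integral>\<^sup>+xy. ennreal (cond_info Q n (fst xy) (snd xy))
        \<partial>measure_pmf (Q n))
       \<le> ennreal (2 powr (-(real n * \<gamma>))) * ennreal (real n * C)"
           by (intro mult_left_mono C(2) elim(2)) auto
    also have "\<dots> = ennreal (2 powr (-(real n * \<gamma>)) * (real n * C))" using C by (simp add: ennreal_mult)
    also have "\<dots> \<le> ennreal (real n * \<zeta>)"
    proof (rule ennreal_leI)
      have "2 powr (-(real n * \<gamma>)) * C \<le> \<zeta> / (C + 1) * C" using elim(1) C by (intro mult_right_mono) auto
      also have "\<dots> \<le> \<zeta>" using z C by (simp add: field_simps)
      finally have "2 powr (-(real n * \<gamma>)) * C \<le> \<zeta>" .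
      hence "real n * (2 powr (-(real n * \<gamma>)) * C) \<le> real n * \<zeta>" by (intro mult_left_mono) auto
      thus "2 powr (-(real n * \<gamma>)) * (real n * C) \<le> real n * \<zeta>" by (simp add: mult_ac)
    qed
    finally show ?case .
  qed
qed

section \<open>Mixtures of two sources\<close>

definition low_divergence_set :: "('a, 'b) source \<Rightarrow> ('a, 'c) source \<Rightarrow> nat \<Rightarrow> real \<Rightarrow> 'a list set" where
  "low_divergence_set Q R n \<gamma> = {x. (1 / real n) * log 2 (PX Q n x / PX R n x) < \<gamma>}"

lemma PX_le_if_not_low_divergence:
  assumes g: "\<gamma> > 0" and x: "x \<notin> low_divergence_set Q R n \<gamma>" and r: "PX R n x > 0"
  shows "PX R n x \<le> 2 powr (-(real n * \<gamma>)) * PX Q n x"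
proof -
  have h: "(1 / real n) * log 2 (PX Q n x / PX R n x) \<ge> \<gamma>" using x
      by (simp add: low_divergence_set_def not_less)
  have n: "n > 0" using h g by (cases n) auto
  hence l: "log 2 (PX Q n x / PX R n x) \<ge> real n * \<gamma>" using h by (simp add: field_simps)
  have rpos: "PX Q n x / PX R n x > 0"
  proof (rule ccontr)
    assume "\<not> PX Q n x / PX R n x > 0"
    hence z: "PX Q n x / PX R n x = 0" using PX_nonneg[of Q n x] r
        by (simp add: not_less divide_le_0_iff)
    have "log 2 (PX Q n x / PX R n x) = 0" unfolding z by (simp add: log_def)
    moreover have "real n * \<gamma> > 0" using n g by simp
    ultimately show False using l by linarith
  qed
  have "2 powr (real n * \<gamma>) \<le> PX Q n x / PX R n x" using l rpos by (simp add: le_log_iff)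
  hence "2 powr (real n * \<gamma>) * PX R n x \<le> PX Q n x" using r by (simp add: field_simps)
  hence "2 powr (-(real n * \<gamma>)) * (2 powr (real n * \<gamma>) * PX R n x) \<le> 2 powr (-(real n * \<gamma>)) * PX Q n x"
    by (intro mult_left_mono) auto
  thus ?thesis by (simp add: powr_minus field_simps)
qed

lemma low_divergence_prob_tendsto_zero:
  assumes "D_lower Q R > 0"
  shows "\<exists>\<gamma>>0. (\<lambda>n. measure (measure_pmf (map_pmf fst (Q n))) (low_divergence_set Q R n \<gamma>)) \<longlonglongrightarrow> 0"
proof -
  from assms obtain s where s: "s \<in> {ereal \<beta> | \<beta>.
     (\<lambda>n. measure_pmf.prob (map_pmf fst (Q n))
            {x. (1 / real n) * log 2 (PX Q n x / PX R n x) < \<beta>}) \<longlonglongrightarrow> 0}" "0 < s"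
    unfolding D_lower_def by (auto simp: less_Sup_iff)
  then obtain \<beta> where "s = ereal \<beta>" "(\<lambda>n. measure_pmf.prob (map_pmf fst (Q n))
            {x. (1 / real n) * log 2 (PX Q n x / PX R n x) < \<beta>}) \<longlonglongrightarrow> 0" by auto
  thus ?thesis using s(2) by (intro exI[of _ \<beta>]) (auto simp: low_divergence_set_def)
qed

locale source_mixture =
  fixes A B M :: "('a, 'b) source" and a b :: real
  assumes a_pos: "a > 0" and b_pos: "b > 0" and ab: "a + b = 1"
    and mix: "\<And>n xy. pmf (M n) xy = a * pmf (A n) xy + b * pmf (B n) xy"
begin

lemma mixture_swap: "source_mixture B A M b a"
  using a_pos b_pos ab mix by unfold_locales (auto simp: add.commute)

lemma ennreal_pmf_mixture: "ennreal (pmf (M n) xy) = ennreal a * ennreal (pmf (A n) xy)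
    + ennreal b * ennreal (pmf (B n) xy)"
  using a_pos b_pos by (simp add: mix ennreal_plus ennreal_mult)

lemma PX_mix: "PX M n x = a * PX A n x + b * PX B n x"
  unfolding PX_def using a_pos b_pos mix by (intro pmf_map_mixture) auto

lemma PY_mix: "PY M n y = a * PY A n y + b * PY B n y"
  unfolding PY_def using a_pos b_pos mix by (intro pmf_map_mixture) auto

lemma PX_mixture_pos: "PX A n x > 0 \<Longrightarrow> PX M n x > 0"
  using a_pos b_pos PX_nonneg[of B n x] by (simp add: PX_mix add_pos_nonneg)

text \<open>Off these outputs the information densities of \<open>M\<close> and \<open>A\<close> at \<open>(x, y)\<close> differ by at most
  \<open>n\<delta>\<close>.\<close>

definition bad_outputs :: "nat \<Rightarrow> real \<Rightarrow> 'a list \<Rightarrow> 'b list set" where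
  "bad_outputs n \<delta> x = {y. a * 2 powr (real n * \<delta>) * PY A n y < PY M n y \<or>
                  a * 2 powr (real n * \<delta>) * pmf (A n) (x,y) < pmf (M n) (x,y)}"

definition bad_output_mass :: "nat \<Rightarrow> real \<Rightarrow> 'a list \<Rightarrow> ennreal" where
  "bad_output_mass n \<delta> x = (\<integral>\<^sup>+y. ennreal (pmf (A n) (x,y)) * indicator (bad_outputs n \<delta> x) y
      \<partial>count_space UNIV)"

lemma bad_output_mass_le_PX: "bad_output_mass n \<delta> x \<le> ennreal (PX A n x)"
  unfolding bad_output_mass_def ennreal_PX_eq_nn_integral
      by (intro nn_integral_mono) (auto simp: indicator_def)

lemma bad_output_mass_real: "bad_output_mass n \<delta> x = ennreal (enn2real (bad_output_mass n \<delta> x))"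
  using bad_output_mass_le_PX[of n \<delta> x] by (cases "bad_output_mass n \<delta> x") (auto simp: top_unique)

lemma nn_integral_bad_output_mass_le:
  "(\<integral>\<^sup>+x. bad_output_mass n \<delta> x \<partial>count_space UNIV) \<le> ennreal (2 / (a * 2 powr (real n * \<delta>)))"
proof -
  let ?t = "a * 2 powr (real n * \<delta>)"
  have t: "?t > 0" using a_pos by simp
  have "(\<integral>\<^sup>+x. bad_output_mass n \<delta> x \<partial>count_space UNIV)
      = (\<integral>\<^sup>+xy. indicator (bad_outputs n \<delta> (fst xy)) (snd xy) \<partial>measure_pmf (A n))"
    unfolding bad_output_mass_def
    by (rule nn_integral_measure_pmf_pair[where g="\<lambda>x y. indicator (bad_outputs n \<delta> x) y"])
  also have "\<dots> \<le> (\<integral>\<^sup>+xy. indicator {y. ?t * PY A n y < PY M n y} (snd xy)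
      + indicator {xy. ?t * pmf (A n) xy < pmf (M n) xy} xy \<partial>measure_pmf (A n))"
    by (intro nn_integral_mono) (auto simp: bad_outputs_def indicator_def mult.assoc)
  also have "\<dots> = emeasure (measure_pmf (map_pmf snd (A n))) {y. ?t * PY A n y < PY M n y}
      + emeasure (measure_pmf (A n)) {xy. ?t * pmf (A n) xy < pmf (M n) xy}"
    by (simp add: nn_integral_add emeasure_map_pmf indicator_vimage[symmetric] vimage_def)
  also have "\<dots> \<le> ennreal (1 / ?t) + ennreal (1 / ?t)"
    unfolding PY_def by (intro add_mono emeasure_pmf_ratio_less_le t)
  also have "\<dots> = ennreal (2 / ?t)" using t by (simp flip: ennreal_plus)
  finally show ?thesis .
qed

lemma cond_info_mixture_le:
  assumes p: "pmf (A n) (x,y) > 0" and y: "y \<notin> bad_outputs n \<delta> x"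
  shows "cond_info M n x y \<le> cond_info A n x y + real n * \<delta>"
proof -
  let ?t = "2 powr (real n * \<delta>)"
  have pM: "pmf (M n) (x,y) \<ge> a * pmf (A n) (x,y)" using b_pos by (simp add: mix)
  have pMpos: "pmf (M n) (x,y) > 0" using pM p a_pos by (smt (verit) mult_pos_pos)
  have rA: "PY A n y \<ge> pmf (A n) (x,y)" by (rule pmf_le_PY)
  have rApos: "PY A n y > 0" using rA p by linarith
  have rM: "PY M n y \<le> a * ?t * PY A n y" using y by (simp add: bad_outputs_def not_less)
  have rMpos: "PY M n y > 0" using pMpos pmf_le_PY[of M n x y] by linarith
  have "cond_info M n x y = log 2 (PY M n y) - log 2 (pmf (M n) (x,y))"
      by (rule cond_info_eq_log_diff[of M n x y, OF pMpos])
  also have "\<dots> \<le> log 2 (a * ?t * PY A n y) - log 2 (a * pmf (A n) (x,y))"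
    using rM pM rMpos p a_pos by (intro diff_mono log_mono) auto
  also have "\<dots> = real n * \<delta> + (log 2 (PY A n y) - log 2 (pmf (A n) (x,y)))"
    using a_pos rApos p by (simp add: log_mult)
  also have "\<dots> = cond_info A n x y + real n * \<delta>" by (simp add: cond_info_eq_log_diff[of A n x y, OF p])
  finally show ?thesis .
qed

lemma cond_info_component_le:
  assumes p: "pmf (A n) (x,y) > 0" and y: "y \<notin> bad_outputs n \<delta> x"
  shows "cond_info A n x y \<le> cond_info M n x y + real n * \<delta>"
proof -
  let ?t = "2 powr (real n * \<delta>)"
  have pM: "pmf (M n) (x,y) \<le> a * ?t * pmf (A n) (x,y)" using y by (simp add: bad_outputs_def not_less)
  have pM2: "pmf (M n) (x,y) \<ge> a * pmf (A n) (x,y)" using b_pos by (simp add: mix)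
  have pMpos: "pmf (M n) (x,y) > 0" using pM2 p a_pos by (smt (verit) mult_pos_pos)
  have rA: "PY A n y \<ge> pmf (A n) (x,y)" by (rule pmf_le_PY)
  have rApos: "PY A n y > 0" using rA p by linarith
  have rM: "PY M n y \<ge> a * PY A n y" using b_pos PY_nonneg[of B n y] by (simp add: PY_mix)
  have "cond_info A n x y = log 2 (PY A n y) - log 2 (pmf (A n) (x,y))"
      by (rule cond_info_eq_log_diff[of A n x y, OF p])
  also have "\<dots> = log 2 (a * PY A n y) - log 2 (a * ?t * pmf (A n) (x,y)) + real n * \<delta>"
    using a_pos rApos p by (simp add: log_mult)
  also have "\<dots> \<le> log 2 (PY M n y) - log 2 (pmf (M n) (x,y)) + real n * \<delta>"
    using rM pM rApos pMpos a_pos by (intro add_right_mono diff_mono log_mono) auto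
  also have "\<dots> = cond_info M n x y + real n * \<delta>"
      by (simp add: cond_info_eq_log_diff[of M n x y, OF pMpos])
  finally show ?thesis .
qed

lemma info_integral_mixture_le:
  "(\<integral>\<^sup>+xy. indicator S xy * ennreal (cond_info M n (fst xy) (snd xy)) \<partial>measure_pmf (A n)) \<le>
   (\<integral>\<^sup>+xy. indicator S xy * ennreal (cond_info A n (fst xy) (snd xy)) \<partial>measure_pmf (A n))
     + ennreal (1 / (a * ln 2))"
proof -
  define W where "W y = log 2 (PY M n y / (a * PY A n y))" for y
  have PY_dom: "a * PY A n y \<le> PY M n y" for y
    using b_pos PY_nonneg[of B n y] by (simp add: PY_mix)
  have pw: "indicator S xy * ennreal (cond_info M n (fst xy) (snd xy)) \<le>
      indicator S xy * ennreal (cond_info A n (fst xy) (snd xy)) + ennreal (W (snd xy))"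
    if xy: "xy \<in> set_pmf (A n)" for xy
  proof -
    obtain x y where xy_eq: "xy = (x,y)" by (cases xy)
    have p: "pmf (A n) (x,y) > 0" using xy xy_eq by (simp add: set_pmf_iff less_le)
    have pM: "pmf (M n) (x,y) \<ge> a * pmf (A n) (x,y)" using b_pos by (simp add: mix)
    have pMpos: "pmf (M n) (x,y) > 0" using pM p a_pos by (smt (verit) mult_pos_pos)
    have rApos: "PY A n y > 0" using pmf_le_PY[of A n x y] p by linarith
    have rMpos: "PY M n y > 0" using pmf_le_PY[of M n x y] pMpos by linarith
    have "1 \<le> PY M n y / (a * PY A n y)" using PY_dom[of y] rApos a_pos by (simp add: field_simps)
    hence W0: "W y \<ge> 0" by (simp add: W_def)
    have "cond_info M n x y = log 2 (PY M n y) - log 2 (pmf (M n) (x,y))"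
      by (rule cond_info_eq_log_diff[of M n x y, OF pMpos])
    also have "\<dots> \<le> log 2 (PY M n y) - log 2 (a * pmf (A n) (x,y))"
      using pM p a_pos rMpos by (intro diff_mono log_mono) auto
    also have "\<dots> = cond_info A n x y + W y"
      unfolding W_def cond_info_eq_log_diff[of A n x y, OF p] using a_pos p rApos rMpos
      by (simp add: log_mult log_divide)
    finally have "ennreal (cond_info M n x y) \<le> ennreal (cond_info A n x y) + ennreal (W y)"
      using cond_info_nonneg[of A n x y] W0 by (simp add: ennreal_leI flip: ennreal_plus)
    thus ?thesis unfolding xy_eq by (cases "(x,y) \<in> S") (auto simp: add_increasing)
  qed
  have "(\<integral>\<^sup>+xy. ennreal (W (snd xy)) \<partial>measure_pmf (A n))
      = (\<integral>\<^sup>+y. ennreal (PY A n y) * ennreal (W y) \<partial>count_space UNIV)"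
    unfolding PY_def by (rule nn_integral_pmf_map_snd[symmetric])
  also have "\<dots> \<le> ennreal (1 / (a * ln 2))"
    unfolding W_def PY_def by (rule nn_integral_pmf_log_ratio_le[OF a_pos PY_dom[unfolded PY_def]])
  finally have W_int: "(\<integral>\<^sup>+xy. ennreal (W (snd xy)) \<partial>measure_pmf (A n)) \<le> ennreal (1 / (a * ln 2))" .
  have "(\<integral>\<^sup>+xy. indicator S xy * ennreal (cond_info M n (fst xy) (snd xy)) \<partial>measure_pmf (A n)) \<le>
       (\<integral>\<^sup>+xy. indicator S xy * ennreal (cond_info A n (fst xy) (snd xy))
           + ennreal (W (snd xy)) \<partial>measure_pmf (A n))"
    by (intro nn_integral_mono_AE) (auto simp: AE_measure_pmf_iff intro: pw)
  also have "\<dots> = (\<integral>\<^sup>+xy. indicator S xy * ennreal (cond_info A n (fst xy) (snd xy)) \<partial>measure_pmf (A n)) +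
       (\<integral>\<^sup>+xy. ennreal (W (snd xy)) \<partial>measure_pmf (A n))"
    by (simp add: nn_integral_add)
  finally show ?thesis using W_int by (meson add_left_mono order_trans)
qed

text \<open>At a good input the share of \<open>B\<close> in \<open>P_M(x)\<close> is small and the bad outputs carry little of
  \<open>P_A(x)\<close>; together these cost at most \<open>\<eta>\<close> in the quantile level when comparing \<open>hbar_M\<close> and
  \<open>hbar_A\<close>.\<close>

definition good_input :: "nat \<Rightarrow> real \<Rightarrow> real \<Rightarrow> 'a list \<Rightarrow> bool" where
  "good_input n \<delta> \<eta> x \<longleftrightarrow> b * PX B n x \<le> a * PX A n x \<and>
     2 * (b * PX B n x / PX M n x) * PX A n x + enn2real (bad_output_mass n \<delta> x) \<le> \<eta> * PX A n x"

lemma good_input_upper_arith: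
  fixes qA s qM m e h :: real
  assumes "qM = a * qA + s" "s \<ge> 0" "s \<le> a * qA" "2 * (s / qM) * qA + m \<le> h * qA"
    "qM > 0" "0 \<le> e" "qA > 0"
  shows "a * (e - h) * qA + a * m + s \<le> e * qM"
proof -
  have h1: "s \<le> a * (2 * (s / qM) * qA)"
  proof -
    have "qM \<le> 2 * a * qA" using assms by linarith
    hence "(s / qM) * qM \<le> (s / qM) * (2 * a * qA)" using assms by (intro mult_left_mono) auto
    thus ?thesis using assms by (simp add: mult_ac)
  qed
  have "m \<le> h * qA - 2 * (s / qM) * qA" using assms by linarith
  hence "a * m \<le> a * (h * qA - 2 * (s / qM) * qA)" using a_pos by (simp add: mult_left_mono)
  hence h3: "a * m \<le> a * h * qA - s" using h1 by (simp add: right_diff_distrib mult_ac)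
  have "a * (e - h) * qA + a * m + s \<le> a * e * qA" using h3 by (simp add: algebra_simps)
  also have "\<dots> \<le> e * qM" using assms by (simp add: algebra_simps)
  finally show ?thesis .
qed

lemma good_input_lower_arith:
  fixes qA s qM m e h :: real
  assumes "qM = a * qA + s" "s \<ge> 0" "s \<le> a * qA" "2 * (s / qM) * qA + m \<le> h * qA"
    "qM > 0" "0 \<le> e" "e < 1" "qA > 0"
  shows "e * qM / a + m \<le> (e + h) * qA"
proof -
  have h1: "e * (s / a) \<le> 2 * (s / qM) * qA"
  proof -
    have "qM / a \<le> 2 * qA" using assms a_pos by (simp add: field_simps)
    hence "(s / qM) * (qM / a) \<le> (s / qM) * (2 * qA)" using assms by (intro mult_left_mono) auto
    hence "s / a \<le> 2 * (s / qM) * qA" using assms by (simp add: mult_ac)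
    moreover have "e * (s / a) \<le> s / a" using assms a_pos by (intro mult_left_le_one_le) auto
    ultimately show ?thesis by linarith
  qed
  have eq: "e * qM / a = e * qA + e * (s / a)" using assms a_pos by (simp add: field_simps)
  show ?thesis using h1 eq assms(4) by (simp add: algebra_simps)
qed

lemma info_tail_mixture_le:
  "info_tail M n x (t + real n * \<delta>) \<le>
     ennreal a * info_tail A n x t + ennreal a * bad_output_mass n \<delta> x + ennreal b * ennreal (PX B n x)"
proof -
  have "info_tail M n x (t + real n * \<delta>) \<le>
      (\<integral>\<^sup>+y. ennreal a * (ennreal (pmf (A n) (x,y)) * indicator {y. t < cond_info A n x y} y)
        + ennreal a * (ennreal (pmf (A n) (x,y)) * indicator (bad_outputs n \<delta> x) y)
        + ennreal b * ennreal (pmf (B n) (x,y)) \<partial>count_space UNIV)"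
    unfolding info_tail_def
  proof (intro nn_integral_mono)
    fix y
    have "ennreal a * ennreal (pmf (A n) (x,y)) \<le>
          ennreal a * (ennreal (pmf (A n) (x,y)) * indicator {y. t < cond_info A n x y} y)
        + ennreal a * (ennreal (pmf (A n) (x,y)) * indicator (bad_outputs n \<delta> x) y)"
      if "t + real n * \<delta> < cond_info M n x y"
    proof (cases "pmf (A n) (x,y) > 0 \<and> y \<notin> bad_outputs n \<delta> x")
      case True
      hence "cond_info M n x y \<le> cond_info A n x y + real n * \<delta>" using cond_info_mixture_le by blast
      thus ?thesis using that by simp
    next
      case False
      hence "pmf (A n) (x,y) = 0 \<or> y \<in> bad_outputs n \<delta> x" using pmf_nonneg[of "A n" "(x,y)"] by linarith
      thus ?thesis by auto
    qed
    thus "ennreal (pmf (M n) (x, y)) * indicator {y. t + real n * \<delta> < cond_info M n x y} y \<le>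
        ennreal a * (ennreal (pmf (A n) (x,y)) * indicator {y. t < cond_info A n x y} y)
      + ennreal a * (ennreal (pmf (A n) (x,y)) * indicator (bad_outputs n \<delta> x) y)
      + ennreal b * ennreal (pmf (B n) (x,y))"
      by (cases "t + real n * \<delta> < cond_info M n x y") (auto simp: ennreal_pmf_mixture add_right_mono)
  qed
  also have "\<dots> = ennreal a * info_tail A n x t + ennreal a * bad_output_mass n \<delta> x
      + ennreal b * ennreal (PX B n x)"
    by (simp add: nn_integral_add nn_integral_cmult info_tail_def bad_output_mass_def
        ennreal_PX_eq_nn_integral)
  finally show ?thesis .
qed

lemma info_tail_component_le:
  "info_tail A n x (t + real n * \<delta>) \<le> ennreal (1 / a) * info_tail M n x t + bad_output_mass n \<delta> x"
proof -
  have "info_tail A n x (t + real n * \<delta>) \<le>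
      (\<integral>\<^sup>+y. ennreal (1 / a) * (ennreal (pmf (M n) (x,y)) * indicator {y. t < cond_info M n x y} y)
        + ennreal (pmf (A n) (x,y)) * indicator (bad_outputs n \<delta> x) y \<partial>count_space UNIV)"
    unfolding info_tail_def
  proof (intro nn_integral_mono)
    fix y
    have pA: "ennreal (pmf (A n) (x,y)) \<le> ennreal (1 / a) * ennreal (pmf (M n) (x,y))"
    proof -
      have "pmf (A n) (x,y) \<le> (1 / a) * pmf (M n) (x,y)"
        using a_pos b_pos pmf_nonneg[of "B n" "(x,y)"] by (simp add: mix field_simps)
      thus ?thesis using a_pos by (simp add: ennreal_mult[symmetric])
    qed
    show "ennreal (pmf (A n) (x, y)) * indicator {y. t + real n * \<delta> < cond_info A n x y} y \<le>
        ennreal (1 / a) * (ennreal (pmf (M n) (x,y)) * indicator {y. t < cond_info M n x y} y)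
      + ennreal (pmf (A n) (x,y)) * indicator (bad_outputs n \<delta> x) y"
    proof (cases "t + real n * \<delta> < cond_info A n x y")
      case False thus ?thesis by simp
    next
      case True
      show ?thesis
      proof (cases "pmf (A n) (x,y) > 0 \<and> y \<notin> bad_outputs n \<delta> x")
        case True2: True
        hence "cond_info A n x y \<le> cond_info M n x y + real n * \<delta>" using cond_info_component_le by blast
        hence "t < cond_info M n x y" using True by linarith
        thus ?thesis using True pA by (simp add: add_increasing2)
      next
        case False
        hence "pmf (A n) (x,y) = 0 \<or> y \<in> bad_outputs n \<delta> x" using pmf_nonneg[of "A n" "(x,y)"]
            by linarith
        thus ?thesis by (auto simp: indicator_def add_increasing)
      qed
    qed
  qed
  also have "\<dots> = ennreal (1 / a) * info_tail M n x t + bad_output_mass n \<delta> x"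
    by (simp add: nn_integral_add nn_integral_cmult info_tail_def bad_output_mass_def)
  finally show ?thesis .
qed

lemma hbar_mixture_le:
  assumes q: "PX A n x > 0" and g: "good_input n \<delta> \<eta> x" and e: "0 < \<eta>" "\<eta> < \<epsilon>" "\<epsilon> < 1"
  shows "hbar M n \<epsilon> x \<le> hbar A n (\<epsilon> - \<eta>) x + real n * \<delta>"
proof (rule le_add_if_le_all_greater)
  fix t assume t: "hbar A n (\<epsilon> - \<eta>) x < t"
  have tA: "info_tail A n x t \<le> ennreal ((\<epsilon> - \<eta>) * PX A n x)"
    using info_tail_le_if_hbar_less[OF q _ _ t] e by auto
  have qM: "PX M n x > 0" using PX_mixture_pos[OF q] .
  have "info_tail M n x (t + real n * \<delta>) \<le>
      ennreal a * info_tail A n x t + ennreal a * bad_output_mass n \<delta> x + ennreal b * ennreal (PX B n x)"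
    by (rule info_tail_mixture_le)
  also have "\<dots> \<le> ennreal a * ennreal ((\<epsilon> - \<eta>) * PX A n x)
      + ennreal a * ennreal (enn2real (bad_output_mass n \<delta> x)) + ennreal b * ennreal (PX B n x)"
    using tA by (intro add_mono mult_left_mono) (auto simp: bad_output_mass_real[symmetric])
  also have "\<dots> = ennreal (a * (\<epsilon> - \<eta>) * PX A n x + a * enn2real (bad_output_mass n \<delta> x) + b * PX B n x)"
    using a_pos b_pos e PX_nonneg[of A n x] PX_nonneg[of B n x]
    by (simp add: ennreal_mult ennreal_plus mult.assoc)
  also have "\<dots> \<le> ennreal (\<epsilon> * PX M n x)"
    by (intro ennreal_leI good_input_upper_arith)
      (use g qM q e b_pos PX_nonneg[of B n x] in \<open>auto simp: good_input_def PX_mix\<close>)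
  finally show "hbar M n \<epsilon> x \<le> t + real n * \<delta>" using hbar_le_if_info_tail_le[OF qM _ e(3)] e by auto
qed

lemma hbar_component_le:
  assumes q: "PX A n x > 0" and g: "good_input n \<delta> \<eta> x" and e: "0 < \<epsilon>" "0 < \<eta>" "\<epsilon> + \<eta> < 1"
  shows "hbar A n (\<epsilon> + \<eta>) x \<le> hbar M n \<epsilon> x + real n * \<delta>"
proof (rule le_add_if_le_all_greater)
  fix t assume t: "hbar M n \<epsilon> x < t"
  have qM: "PX M n x > 0" using PX_mixture_pos[OF q] .
  have tM: "info_tail M n x t \<le> ennreal (\<epsilon> * PX M n x)"
    using info_tail_le_if_hbar_less[OF qM _ _ t] e by auto
  have "info_tail A n x (t + real n * \<delta>) \<le> ennreal (1 / a) * info_tail M n x t + bad_output_mass n \<delta> x"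
    by (rule info_tail_component_le)
  also have "\<dots> \<le> ennreal (1 / a) * ennreal (\<epsilon> * PX M n x) + ennreal (enn2real (bad_output_mass n \<delta> x))"
    using tM by (intro add_mono mult_left_mono) (auto simp: bad_output_mass_real[symmetric])
  also have "\<dots> = ennreal (\<epsilon> * PX M n x / a + enn2real (bad_output_mass n \<delta> x))"
    using a_pos e PX_nonneg[of M n x] by (simp add: ennreal_mult[symmetric] ennreal_plus)
  also have "\<dots> \<le> ennreal ((\<epsilon> + \<eta>) * PX A n x)"
    by (intro ennreal_leI good_input_lower_arith[where s="b * PX B n x"])
      (use g qM q e b_pos PX_nonneg[of B n x] in \<open>auto simp: good_input_def PX_mix\<close>)
  finally show "hbar A n (\<epsilon> + \<eta>) x \<le> t + real n * \<delta>" using hbar_le_if_info_tail_le[OF q _ e(3)] e by auto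
qed

definition bad_input :: "nat \<Rightarrow> real \<Rightarrow> real \<Rightarrow> 'a list \<Rightarrow> bool" where
  "bad_input n \<delta> \<eta> x \<longleftrightarrow> PX A n x > 0 \<and> \<not> good_input n \<delta> \<eta> x"

lemma prob_bad_output_mass_le:
  assumes e: "\<eta> > 0"
  shows "measure (measure_pmf (map_pmf fst (A n)))
      {x. PX A n x > 0 \<and> \<eta> * PX A n x < 2 * enn2real (bad_output_mass n \<delta> x)}
     \<le> 4 / (\<eta> * a * 2 powr (real n * \<delta>))"
proof -
  let ?Mk = "{x. PX A n x > 0 \<and> \<eta> * PX A n x < 2 * enn2real (bad_output_mass n \<delta> x)}"
  have "emeasure (measure_pmf (map_pmf fst (A n))) ?Mk
      = (\<integral>\<^sup>+x. indicator ?Mk x \<partial>measure_pmf (map_pmf fst (A n)))"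
    by (rule nn_integral_indicator[symmetric]) simp
  also have "\<dots> = (\<integral>\<^sup>+x. ennreal (PX A n x) * indicator ?Mk x \<partial>count_space UNIV)"
    unfolding PX_def by (rule nn_integral_measure_pmf)
  also have "\<dots> \<le> (\<integral>\<^sup>+x. ennreal (2/\<eta>) * bad_output_mass n \<delta> x \<partial>count_space UNIV)"
  proof (intro nn_integral_mono)
    fix x
    show "ennreal (PX A n x) * indicator ?Mk x \<le> ennreal (2/\<eta>) * bad_output_mass n \<delta> x"
    proof (cases "x \<in> ?Mk")
      case True
      hence "PX A n x \<le> 2/\<eta> * enn2real (bad_output_mass n \<delta> x)" using e by (simp add: field_simps)
      hence "ennreal (PX A n x) \<le> ennreal (2/\<eta> * enn2real (bad_output_mass n \<delta> x))" by (rule ennreal_leI)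
      also have "\<dots> = ennreal (2/\<eta>) * bad_output_mass n \<delta> x" using e
          by (subst ennreal_mult) (auto simp: bad_output_mass_real[symmetric])
      finally show ?thesis using True by simp
    qed simp
  qed
  also have "\<dots> = ennreal (2/\<eta>) * (\<integral>\<^sup>+x. bad_output_mass n \<delta> x \<partial>count_space UNIV)"
      by (simp add: nn_integral_cmult)
  also have "\<dots> \<le> ennreal (2/\<eta>) * ennreal (2 / (a * 2 powr (real n * \<delta>)))"
      by (intro mult_left_mono nn_integral_bad_output_mass_le) auto
  also have "\<dots> = ennreal (4 / (\<eta> * a * 2 powr (real n * \<delta>)))" using e a_pos
      by (simp add: ennreal_mult[symmetric])
  finally show ?thesis using e a_pos by (simp add: measure_pmf.emeasure_eq_measure)
qed

lemma bad_input_subset: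
  assumes g: "\<gamma> > 0" and e: "\<eta> > 0"
    and n1: "b * 2 powr (-(real n * \<gamma>)) \<le> a" and n2: "4 * b * 2 powr (-(real n * \<gamma>)) \<le> a * \<eta>"
  shows "{x. bad_input n \<delta> \<eta> x} \<subseteq> low_divergence_set A B n \<gamma>
      \<union> {x. PX A n x > 0 \<and> \<eta> * PX A n x < 2 * enn2real (bad_output_mass n \<delta> x)}"
proof
  fix x assume "x \<in> {x. bad_input n \<delta> \<eta> x}"
  hence q: "PX A n x > 0" and ng: "\<not> good_input n \<delta> \<eta> x" by (auto simp: bad_input_def)
  show "x \<in> low_divergence_set A B n \<gamma>
      \<union> {x. PX A n x > 0 \<and> \<eta> * PX A n x < 2 * enn2real (bad_output_mass n \<delta> x)}"
  proof (rule ccontr)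
    assume "\<not> ?thesis"
    hence na: "x \<notin> low_divergence_set A B n \<gamma>" and m: "2 * enn2real (bad_output_mass n \<delta> x)
        \<le> \<eta> * PX A n x" using q by auto
    have qM: "PX M n x > 0" by (rule PX_mixture_pos[OF q])
    let ?p = "2 powr (-(real n * \<gamma>))"
    have qB: "PX B n x \<le> ?p * PX A n x"
    proof (cases "PX B n x > 0")
      case True thus ?thesis by (rule PX_le_if_not_low_divergence[OF g na])
    next
      case False thus ?thesis using PX_eq_0_if_not_pos[OF False] q by simp
    qed
    have c1: "b * PX B n x \<le> a * PX A n x"
    proof -
      have "b * PX B n x \<le> b * (?p * PX A n x)" using qB b_pos by (intro mult_left_mono) auto
      also have "\<dots> = (b * ?p) * PX A n x" by (simp add: mult_ac)
      also have "\<dots> \<le> a * PX A n x" using n1 q by (intro mult_right_mono) auto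
      finally show ?thesis .
    qed
    have c2: "2 * (b * PX B n x / PX M n x) * PX A n x \<le> 2 * (\<eta> / 4) * PX A n x"
    proof -
      have "a * PX A n x \<le> PX M n x" using b_pos PX_nonneg[of B n x] by (simp add: PX_mix)
      have "b * PX B n x / PX M n x \<le> b * PX B n x / (a * PX A n x)"
        using \<open>a * PX A n x \<le> PX M n x\<close> q a_pos b_pos PX_nonneg[of B n x] qM
        by (intro divide_left_mono) auto
      also have "\<dots> \<le> b * (?p * PX A n x) / (a * PX A n x)"
        using qB b_pos a_pos q by (intro divide_right_mono mult_left_mono) auto
      also have "\<dots> = b * ?p / a" using q a_pos by (simp add: field_simps)
      also have "\<dots> \<le> \<eta> / 4" using n2 a_pos by (simp add: field_simps)
      finally have "b * PX B n x / PX M n x \<le> \<eta> / 4" .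
      thus ?thesis using q by (intro mult_right_mono mult_left_mono) auto
    qed
    have "good_input n \<delta> \<eta> x" unfolding good_input_def using c1 c2 m by linarith
    thus False using ng by simp
  qed
qed

lemma bad_input_prob_tendsto_zero:
  assumes D: "D_lower A B > 0" and d: "\<delta> > 0" and e: "\<eta> > 0"
  shows "(\<lambda>n. measure (measure_pmf (map_pmf fst (A n))) {x. bad_input n \<delta> \<eta> x}) \<longlonglongrightarrow> 0"
proof -
  obtain \<gamma> where g: "\<gamma> > 0" and At: "(\<lambda>n. measure (measure_pmf (map_pmf fst (A n)))
      (low_divergence_set A B n \<gamma>)) \<longlonglongrightarrow> 0"
    using low_divergence_prob_tendsto_zero[OF D] by auto
  have ev1: "eventually (\<lambda>n. b * 2 powr (-(real n * \<gamma>)) \<le> a \<and> 4 * b * 2 powr (-(real n * \<gamma>))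
      \<le> a * \<eta>) sequentially"
  proof -
    have "(\<lambda>n. 4 * b * 2 powr (-(real n * \<gamma>))) \<longlonglongrightarrow> 4 * b * 0"
        by (intro tendsto_mult tendsto_const powr_neg_linear_tendsto_zero g)
    hence "eventually (\<lambda>n. 4 * b * 2 powr (-(real n * \<gamma>)) < min a (a * \<eta>)) sequentially"
      using a_pos e by (intro order_tendstoD(2)) auto
    thus ?thesis
    proof (rule eventually_mono)
      fix n assume h: "4 * b * 2 powr (-(real n * \<gamma>)) < min a (a * \<eta>)"
      have "b * 2 powr (-(real n * \<gamma>)) \<le> 4 * b * 2 powr (-(real n * \<gamma>))" using b_pos by simp
      thus "b * 2 powr (-(real n * \<gamma>)) \<le> a \<and> 4 * b * 2 powr (-(real n * \<gamma>)) \<le> a * \<eta>" using h by linarith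
    qed
  qed
  have R: "(\<lambda>n. measure (measure_pmf (map_pmf fst (A n))) (low_divergence_set A B n \<gamma>)
      + 4 / (\<eta> * a) * 2 powr (-(real n * \<delta>))) \<longlonglongrightarrow> 0 + 4 / (\<eta> * a) * 0"
    by (intro tendsto_add tendsto_mult At tendsto_const powr_neg_linear_tendsto_zero d)
  hence R': "(\<lambda>n. measure (measure_pmf (map_pmf fst (A n))) (low_divergence_set A B n \<gamma>)
      + 4 / (\<eta> * a) * 2 powr (-(real n * \<delta>))) \<longlonglongrightarrow> 0"
    by simp
  show ?thesis
  proof (rule tendsto_sandwich[OF _ _ tendsto_const R'])
    show "eventually (\<lambda>n. 0 \<le> measure (measure_pmf (map_pmf fst (A n))) {x. bad_input n \<delta> \<eta> x})
        sequentially" by simp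
    show "eventually (\<lambda>n. measure (measure_pmf (map_pmf fst (A n))) {x. bad_input n \<delta> \<eta> x} \<le>
        measure (measure_pmf (map_pmf fst (A n))) (low_divergence_set A B n \<gamma>)
            + 4 / (\<eta> * a) * 2 powr (-(real n * \<delta>))) sequentially"
      using ev1
    proof (rule eventually_mono)
      fix n assume h: "b * 2 powr (-(real n * \<gamma>)) \<le> a \<and> 4 * b * 2 powr (-(real n * \<gamma>)) \<le> a * \<eta>"
      let ?Mk = "{x. PX A n x > 0 \<and> \<eta> * PX A n x < 2 * enn2real (bad_output_mass n \<delta> x)}"
      have h1: "measure (measure_pmf (map_pmf fst (A n))) {x. bad_input n \<delta> \<eta> x}
          \<le> measure (measure_pmf (map_pmf fst (A n))) (low_divergence_set A B n \<gamma> \<union> ?Mk)"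
        using bad_input_subset[OF g e] h by (intro measure_pmf.finite_measure_mono) auto
      have h2: "measure (measure_pmf (map_pmf fst (A n))) (low_divergence_set A B n \<gamma> \<union> ?Mk)
          \<le> measure (measure_pmf (map_pmf fst (A n))) (low_divergence_set A B n \<gamma>)
          + measure (measure_pmf (map_pmf fst (A n))) ?Mk"
        by (rule measure_Un_le) auto
      have h3: "measure (measure_pmf (map_pmf fst (A n))) ?Mk \<le> 4 / (\<eta> * a * 2 powr (real n * \<delta>))"
        by (rule prob_bad_output_mass_le) (use d e in auto)
      have h4: "4 / (\<eta> * a * 2 powr (real n * \<delta>)) = 4 / (\<eta> * a) * 2 powr (-(real n * \<delta>))"
        by (simp add: powr_minus field_simps)
      show "measure (measure_pmf (map_pmf fst (A n))) {x. bad_input n \<delta> \<eta> x} \<le>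
        measure (measure_pmf (map_pmf fst (A n))) (low_divergence_set A B n \<gamma>)
            + 4 / (\<eta> * a) * 2 powr (-(real n * \<delta>))"
        using h1 h2 h3 h4 by linarith
    qed
  qed
qed

lemma Hs_eps_mixture_split:
  assumes e: "0 < \<epsilon>" "\<epsilon> < 1"
  shows "Hs_eps M \<epsilon> n = ennreal a * Hs_eps_cross A M n \<epsilon> + ennreal b * Hs_eps_cross B M n \<epsilon>"
proof -
  have "ennreal (PX M n x * hbar M n \<epsilon> x) = ennreal a * ennreal (PX A n x * hbar M n \<epsilon> x)
      + ennreal b * ennreal (PX B n x * hbar M n \<epsilon> x)" for x
  proof (cases "PX M n x > 0")
    case True
    have h: "hbar M n \<epsilon> x \<ge> 0" by (rule hbar_nonneg[OF True e])
    show ?thesis using h a_pos b_pos PX_nonneg[of A n x] PX_nonneg[of B n x]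
      by (simp add: PX_mix ennreal_mult[symmetric] ennreal_plus[symmetric] algebra_simps del:
          ennreal_plus)
  next
    case False
    hence "PX M n x = 0" by (rule PX_eq_0_if_not_pos)
    hence "PX A n x = 0" "PX B n x = 0" using a_pos b_pos PX_nonneg[of A n x] PX_nonneg[of B n x]
      by (simp_all add: PX_mix add_nonneg_eq_0_iff)
    thus ?thesis using \<open>PX M n x = 0\<close> by simp
  qed
  thus ?thesis unfolding Hs_eps_eq_nn_integral[OF e] Hs_eps_cross_def
    by (simp add: nn_integral_add nn_integral_cmult)
qed

lemma Hs_eps_cross_le:
  assumes e: "0 < \<eta>" "\<eta> < \<epsilon>" "\<epsilon> < 1" and d: "\<delta> \<ge> 0"
  shows "Hs_eps_cross A M n \<epsilon> \<le> Hs_eps A (\<epsilon> - \<eta>) n + ennreal (real n * \<delta>) +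
     (\<integral>\<^sup>+x. indicator {x. bad_input n \<delta> \<eta> x} x * ennreal (PX A n x * hbar M n \<epsilon> x) \<partial>count_space UNIV)"
proof -
  have e': "0 < \<epsilon> - \<eta>" "\<epsilon> - \<eta> < 1" using e by auto
  have pw: "ennreal (PX A n x * hbar M n \<epsilon> x) \<le> ennreal (PX A n x * hbar A n (\<epsilon> - \<eta>) x)
      + ennreal (PX A n x) * ennreal (real n * \<delta>)
      + indicator {x. bad_input n \<delta> \<eta> x} x * ennreal (PX A n x * hbar M n \<epsilon> x)" for x
  proof (cases "bad_input n \<delta> \<eta> x")
    case True thus ?thesis by simp
  next
    case nb: False
    show ?thesis
    proof (cases "PX A n x > 0")
      case False thus ?thesis using PX_eq_0_if_not_pos[OF False] by simp
    next
      case True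
      hence g: "good_input n \<delta> \<eta> x" using nb by (simp add: bad_input_def)
      have "ennreal (PX A n x * hbar M n \<epsilon> x)
          \<le> ennreal (PX A n x * hbar A n (\<epsilon> - \<eta>) x) + ennreal (PX A n x) * ennreal (real n * \<delta>)"
        using True hbar_nonneg[OF True e'] hbar_mixture_le[OF True g e] d
        by (intro ennreal_mult_le_add_shift) auto
      thus ?thesis by (simp add: add_increasing2)
    qed
  qed
  have "Hs_eps_cross A M n \<epsilon> \<le> (\<integral>\<^sup>+x. ennreal (PX A n x * hbar A n (\<epsilon> - \<eta>) x)
      + ennreal (PX A n x) * ennreal (real n * \<delta>)
      + indicator {x. bad_input n \<delta> \<eta> x} x * ennreal (PX A n x * hbar M n \<epsilon> x) \<partial>count_space UNIV)"
    unfolding Hs_eps_cross_def by (intro nn_integral_mono pw)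
  also have "\<dots> = Hs_eps A (\<epsilon> - \<eta>) n + ennreal (real n * \<delta>) +
     (\<integral>\<^sup>+x. indicator {x. bad_input n \<delta> \<eta> x} x * ennreal (PX A n x * hbar M n \<epsilon> x) \<partial>count_space UNIV)"
    by (simp add: nn_integral_add nn_integral_multc nn_integral_PX Hs_eps_eq_nn_integral[OF e'])
  finally show ?thesis .
qed

lemma Hs_eps_le_cross:
  assumes e: "0 < \<epsilon>" "0 < \<eta>" "\<epsilon> + \<eta> < 1" and d: "\<delta> \<ge> 0"
  shows "Hs_eps A (\<epsilon> + \<eta>) n \<le> Hs_eps_cross A M n \<epsilon> + ennreal (real n * \<delta>) +
     (\<integral>\<^sup>+x. indicator {x. bad_input n \<delta> \<eta> x} x * ennreal (PX A n x * hbar A n (\<epsilon> + \<eta>) x)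
         \<partial>count_space UNIV)"
proof -
  have e': "0 < \<epsilon> + \<eta>" "\<epsilon> + \<eta> < 1" using e by auto
  have pw: "ennreal (PX A n x * hbar A n (\<epsilon> + \<eta>) x) \<le> ennreal (PX A n x * hbar M n \<epsilon> x)
      + ennreal (PX A n x) * ennreal (real n * \<delta>)
      + indicator {x. bad_input n \<delta> \<eta> x} x * ennreal (PX A n x * hbar A n (\<epsilon> + \<eta>) x)" for x
  proof (cases "bad_input n \<delta> \<eta> x")
    case True thus ?thesis by simp
  next
    case nb: False
    show ?thesis
    proof (cases "PX A n x > 0")
      case False thus ?thesis using PX_eq_0_if_not_pos[OF False] by simp
    next
      case True
      hence g: "good_input n \<delta> \<eta> x" using nb by (simp add: bad_input_def)
      have "hbar M n \<epsilon> x \<ge> 0" by (rule hbar_nonneg[OF PX_mixture_pos[OF True]]) (use e in auto)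
      hence "ennreal (PX A n x * hbar A n (\<epsilon> + \<eta>) x)
          \<le> ennreal (PX A n x * hbar M n \<epsilon> x) + ennreal (PX A n x) * ennreal (real n * \<delta>)"
        using True hbar_component_le[OF True g e] d by (intro ennreal_mult_le_add_shift) auto
      thus ?thesis by (simp add: add_increasing2)
    qed
  qed
  have "Hs_eps A (\<epsilon> + \<eta>) n \<le> (\<integral>\<^sup>+x. ennreal (PX A n x * hbar M n \<epsilon> x)
      + ennreal (PX A n x) * ennreal (real n * \<delta>)
      + indicator {x. bad_input n \<delta> \<eta> x} x * ennreal (PX A n x * hbar A n (\<epsilon> + \<eta>) x) \<partial>count_space UNIV)"
    unfolding Hs_eps_eq_nn_integral[OF e'] by (intro nn_integral_mono pw)
  also have "\<dots> = Hs_eps_cross A M n \<epsilon> + ennreal (real n * \<delta>) +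
     (\<integral>\<^sup>+x. indicator {x. bad_input n \<delta> \<eta> x} x * ennreal (PX A n x * hbar A n (\<epsilon> + \<eta>) x)
         \<partial>count_space UNIV)"
    by (simp add: nn_integral_add nn_integral_multc nn_integral_PX Hs_eps_cross_def)
  finally show ?thesis .
qed

text \<open>An upper bound for \<open>b P_A(x) / P_M(x)\<close>: exponentially small unless \<open>x\<close> is atypical for
  \<open>B\<close> against \<open>A\<close>.\<close>

definition cross_weight :: "nat \<Rightarrow> real \<Rightarrow> 'a list \<Rightarrow> real" where
  "cross_weight n \<gamma> x = 2 powr (-(real n * \<gamma>)) + b / a * indicator (low_divergence_set B A n \<gamma>) x"

lemma cross_weight_nonneg: "cross_weight n \<gamma> x \<ge> 0"
  using a_pos b_pos by (simp add: cross_weight_def)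

lemma PX_ratio_pmf_mixture_le:
  assumes q: "PX A n x > 0" and g: "\<gamma> > 0"
  shows "PX A n x / PX M n x * pmf (M n) (x,y) \<le> pmf (A n) (x,y) + cross_weight n \<gamma> x * pmf (B n) (x,y)"
proof -
  have qM: "PX M n x > 0" by (rule PX_mixture_pos[OF q])
  have A_part: "PX A n x / PX M n x * a \<le> 1"
    using qM q b_pos PX_nonneg[of B n x] by (simp add: PX_mix field_simps)
  have B_part: "PX A n x / PX M n x * b \<le> cross_weight n \<gamma> x"
  proof (cases "x \<in> low_divergence_set B A n \<gamma>")
    case True
    have "PX A n x / PX M n x * b \<le> b / a"
      using qM q b_pos a_pos PX_nonneg[of B n x] by (simp add: PX_mix field_simps)
    thus ?thesis using True by (simp add: cross_weight_def add_increasing)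
  next
    case False
    have "PX A n x * b \<le> 2 powr (-(real n * \<gamma>)) * (b * PX B n x)"
      using PX_le_if_not_low_divergence[OF g False q] b_pos by (simp add: mult_right_mono mult_ac)
    also have "\<dots> \<le> 2 powr (-(real n * \<gamma>)) * PX M n x"
      using a_pos PX_nonneg[of A n x] by (intro mult_left_mono) (auto simp: PX_mix)
    finally show ?thesis using False qM by (simp add: cross_weight_def field_simps)
  qed
  have "PX A n x / PX M n x * pmf (M n) (x,y)
      = (PX A n x / PX M n x * a) * pmf (A n) (x,y) + (PX A n x / PX M n x * b) * pmf (B n) (x,y)"
    by (simp add: mix algebra_simps)
  also have "\<dots> \<le> pmf (A n) (x,y) + cross_weight n \<gamma> x * pmf (B n) (x,y)"
    using mult_right_mono[OF A_part] mult_right_mono[OF B_part] by (simp add: add_mono)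
  finally show ?thesis .
qed

text \<open>Reweighting the Markov bound for the mixture by the posterior odds of \<open>A\<close> moves it to the
  components.\<close>

lemma PX_hbar_mixture_le_info:
  assumes q: "PX A n x > 0" and e: "0 < \<epsilon>" "\<epsilon> < 1" and g: "\<gamma> > 0"
  shows "ennreal (PX A n x * hbar M n \<epsilon> x) \<le> ennreal (1/\<epsilon>) *
    ((\<integral>\<^sup>+y. ennreal (pmf (A n) (x,y)) * ennreal (cond_info M n x y) \<partial>count_space UNIV) +
     (\<integral>\<^sup>+y. ennreal (pmf (B n) (x,y)) * (ennreal (cross_weight n \<gamma> x) * ennreal
         (cond_info M n x y)) \<partial>count_space UNIV))"
proof -
  let ?r = "PX A n x / PX M n x"
  have qM: "PX M n x > 0" by (rule PX_mixture_pos[OF q])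
  have h0: "hbar M n \<epsilon> x \<ge> 0" by (rule hbar_nonneg[OF qM e])
  have key: "ennreal ?r * ennreal (pmf (M n) (x,y))
      \<le> ennreal (pmf (A n) (x,y)) + ennreal (cross_weight n \<gamma> x) * ennreal (pmf (B n) (x,y))" for y
  proof -
    have "ennreal ?r * ennreal (pmf (M n) (x,y)) = ennreal (?r * pmf (M n) (x,y))"
      by (rule ennreal_mult[symmetric]) (use q qM in auto)
    also have "\<dots> \<le> ennreal (pmf (A n) (x,y) + cross_weight n \<gamma> x * pmf (B n) (x,y))"
      by (rule ennreal_leI[OF PX_ratio_pmf_mixture_le[OF q g]])
    also have "\<dots> = ennreal (pmf (A n) (x,y)) + ennreal (cross_weight n \<gamma> x) * ennreal (pmf (B n) (x,y))"
      using cross_weight_nonneg[of n \<gamma> x] by (simp add: ennreal_mult ennreal_plus)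
    finally show ?thesis .
  qed
  have "ennreal (PX A n x * hbar M n \<epsilon> x) = ennreal ?r * ennreal (PX M n x * hbar M n \<epsilon> x)"
    using qM q h0 by (simp add: ennreal_mult[symmetric])
  also have "\<dots> \<le> ennreal ?r * (ennreal (1/\<epsilon>) *
      (\<integral>\<^sup>+y. ennreal (pmf (M n) (x,y)) * ennreal (cond_info M n x y) \<partial>count_space UNIV))"
    by (intro mult_left_mono PX_hbar_le_info_integral[OF qM e]) simp
  also have "\<dots> = ennreal (1/\<epsilon>) *
      (ennreal ?r * (\<integral>\<^sup>+y. ennreal (pmf (M n) (x,y)) * ennreal (cond_info M n x y) \<partial>count_space UNIV))"
    by (simp add: mult_ac)
  also have "\<dots> = ennreal (1/\<epsilon>) *
      (\<integral>\<^sup>+y. (ennreal ?r * ennreal (pmf (M n) (x,y))) * ennreal (cond_info M n x y) \<partial>count_space UNIV)"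
    by (subst nn_integral_cmult[symmetric]) (auto simp: mult.assoc)
  also have "\<dots> \<le> ennreal (1/\<epsilon>) * (\<integral>\<^sup>+y. (ennreal (pmf (A n) (x,y))
      + ennreal (cross_weight n \<gamma> x) * ennreal (pmf (B n) (x,y))) * ennreal (cond_info M n x y)
          \<partial>count_space UNIV)"
    by (intro mult_left_mono nn_integral_mono mult_right_mono key) auto
  also have "\<dots> = ennreal (1/\<epsilon>) *
    ((\<integral>\<^sup>+y. ennreal (pmf (A n) (x,y)) * ennreal (cond_info M n x y) \<partial>count_space UNIV) +
     (\<integral>\<^sup>+y. ennreal (pmf (B n) (x,y)) * (ennreal (cross_weight n \<gamma> x) * ennreal
         (cond_info M n x y)) \<partial>count_space UNIV))"
    by (subst nn_integral_add[symmetric]) (auto intro!: arg_cong2[where f="(*)"] nn_integral_cong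
        simp: distrib_left distrib_right mult_ac)
  finally show ?thesis .
qed

lemma bad_input_Hs_eps_cross_le:
  assumes e: "0 < \<epsilon>" "\<epsilon> < 1" and g: "\<gamma> > 0"
  shows "(\<integral>\<^sup>+x. indicator {x. bad_input n \<delta> \<eta> x} x * ennreal (PX A n x * hbar M n \<epsilon> x)
      \<partial>count_space UNIV) \<le>
    ennreal (1/\<epsilon>) * ((\<integral>\<^sup>+xy. indicator {xy. bad_input n \<delta> \<eta> (fst xy)} xy * ennreal
        (cond_info M n (fst xy) (snd xy)) \<partial>measure_pmf (A n))
     + ennreal (2 powr (-(real n * \<gamma>))) * (\<integral>\<^sup>+xy. ennreal (cond_info M n (fst xy) (snd xy))
         \<partial>measure_pmf (B n))
     + ennreal (b / a) * (\<integral>\<^sup>+xy. indicator {xy. fst xy \<in> low_divergence_set B A n \<gamma>} xy * ennreal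
         (cond_info M n (fst xy) (snd xy)) \<partial>measure_pmf (B n)))"
proof -
  define I :: "'a list \<Rightarrow> ennreal" where "I x = indicator {x. bad_input n \<delta> \<eta> x} x" for x
  let ?w = "\<lambda>x. ennreal (cross_weight n \<gamma> x)"
  have pw: "I x * ennreal (PX A n x * hbar M n \<epsilon> x) \<le>
      ennreal (1/\<epsilon>) * ((\<integral>\<^sup>+y. ennreal (pmf (A n) (x,y)) * (I x * ennreal (cond_info M n x y))
          \<partial>count_space UNIV) +
                     (\<integral>\<^sup>+y. ennreal (pmf (B n) (x,y)) * (?w x * ennreal (cond_info M n x y))
                         \<partial>count_space UNIV))" for x
  proof (cases "PX A n x > 0 \<and> bad_input n \<delta> \<eta> x")
    case False
    hence "I x * ennreal (PX A n x * hbar M n \<epsilon> x) = 0"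
      using PX_eq_0_if_not_pos[of A n x] by (auto simp: I_def bad_input_def)
    thus ?thesis by (simp only: zero_le)
  next
    case True
    hence "I x = 1" by (simp add: I_def)
    thus ?thesis using PX_hbar_mixture_le_info[OF _ e g, of n x] True by simp
  qed
  have "(\<integral>\<^sup>+x. I x * ennreal (PX A n x * hbar M n \<epsilon> x) \<partial>count_space UNIV) \<le>
     (\<integral>\<^sup>+x. ennreal (1/\<epsilon>) * ((\<integral>\<^sup>+y. ennreal (pmf (A n) (x,y)) *
         (I x * ennreal (cond_info M n x y)) \<partial>count_space UNIV) +
                     (\<integral>\<^sup>+y. ennreal (pmf (B n) (x,y)) * (?w x * ennreal (cond_info M n x y))
                         \<partial>count_space UNIV)) \<partial>count_space UNIV)"
    by (intro nn_integral_mono pw)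
  also have "\<dots> =
     ennreal (1/\<epsilon>) * ((\<integral>\<^sup>+xy. I (fst xy) * ennreal (cond_info M n (fst xy) (snd xy)) \<partial>measure_pmf
         (A n)) +
      (\<integral>\<^sup>+xy. ?w (fst xy) * ennreal (cond_info M n (fst xy) (snd xy)) \<partial>measure_pmf (B n)))"
    by (simp add: nn_integral_cmult nn_integral_add
        nn_integral_measure_pmf_pair[where g="\<lambda>x y. I x * ennreal (cond_info M n x y)"]
          nn_integral_measure_pmf_pair[where g="\<lambda>x y. ?w x * ennreal (cond_info M n x y)"])
  also have "(\<integral>\<^sup>+xy. ?w (fst xy) * ennreal (cond_info M n (fst xy) (snd xy)) \<partial>measure_pmf (B n)) =
     ennreal (2 powr (-(real n * \<gamma>))) * (\<integral>\<^sup>+xy. ennreal (cond_info M n (fst xy) (snd xy))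
         \<partial>measure_pmf (B n))
     + ennreal (b / a) * (\<integral>\<^sup>+xy. indicator {xy. fst xy \<in> low_divergence_set B A n \<gamma>} xy * ennreal
         (cond_info M n (fst xy) (snd xy)) \<partial>measure_pmf (B n))"
  proof -
    have "?w x = ennreal (2 powr (-(real n * \<gamma>)))
        + ennreal (b / a) * indicator (low_divergence_set B A n \<gamma>) x" for x
      using a_pos b_pos by (simp add: cross_weight_def ennreal_plus ennreal_mult indicator_def)
    hence "(\<integral>\<^sup>+xy. ?w (fst xy) * ennreal (cond_info M n (fst xy) (snd xy)) \<partial>measure_pmf (B n)) =
        (\<integral>\<^sup>+xy. ennreal (2 powr (-(real n * \<gamma>))) * ennreal (cond_info M n (fst xy) (snd xy)) +
          ennreal (b / a) * (indicator {xy. fst xy \<in> low_divergence_set B A n \<gamma>} xy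
            * ennreal (cond_info M n (fst xy) (snd xy))) \<partial>measure_pmf (B n))"
      by (intro nn_integral_cong) (auto simp: distrib_right distrib_left indicator_def mult_ac)
    thus ?thesis by (simp add: nn_integral_add nn_integral_cmult)
  qed
  also have "(\<integral>\<^sup>+xy. I (fst xy) * ennreal (cond_info M n (fst xy) (snd xy)) \<partial>measure_pmf (A n)) =
      (\<integral>\<^sup>+xy. indicator {xy. bad_input n \<delta> \<eta> (fst xy)} xy * ennreal
          (cond_info M n (fst xy) (snd xy)) \<partial>measure_pmf (A n))"
    by (intro nn_integral_cong) (simp add: I_def indicator_def)
  finally show ?thesis unfolding I_def by (simp add: add.assoc)
qed

lemma sublinear_bad_input_info:
  assumes uiA: "uniformly_integrable A" and D: "D_lower A B > 0" and d: "\<delta> > 0" and e: "\<eta> > 0"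
  shows "sublinear (\<lambda>n. \<integral>\<^sup>+xy. indicator (fst -` {x. bad_input n \<delta> \<eta> x}) xy * ennreal
      (cond_info A n (fst xy) (snd xy)) \<partial>measure_pmf (A n))"
  by (rule uniformly_integrable_sublinear[OF uiA]) (use bad_input_prob_tendsto_zero[OF D d e] in simp)

lemma sublinear_bad_input_Hs_eps_cross:
  assumes uiA: "uniformly_integrable A" and uiB: "uniformly_integrable B"
    and DAB: "D_lower A B > 0" and DBA: "D_lower B A > 0"
    and e: "0 < \<epsilon>" "\<epsilon> < 1" and d: "\<delta> > 0" and h: "\<eta> > 0"
  shows "sublinear (\<lambda>n. \<integral>\<^sup>+x. indicator {x. bad_input n \<delta> \<eta> x} x * ennreal
      (PX A n x * hbar M n \<epsilon> x) \<partial>count_space UNIV)"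
proof -
  interpret sw: source_mixture B A M b a by (rule mixture_swap)
  obtain \<gamma> where g: "\<gamma> > 0"
    and AtB: "(\<lambda>n. measure (measure_pmf (map_pmf fst (B n))) (low_divergence_set B A n \<gamma>)) \<longlonglongrightarrow> 0"
    using low_divergence_prob_tendsto_zero[OF DBA] by auto
  let ?LMA = "\<lambda>n S. \<integral>\<^sup>+xy. indicator S xy * ennreal (cond_info M n (fst xy) (snd xy)) \<partial>measure_pmf (A n)"
  let ?LMB = "\<lambda>n S. \<integral>\<^sup>+xy. indicator S xy * ennreal (cond_info M n (fst xy) (snd xy)) \<partial>measure_pmf (B n)"
  let ?LA = "\<lambda>n S. \<integral>\<^sup>+xy. indicator S xy * ennreal (cond_info A n (fst xy) (snd xy)) \<partial>measure_pmf (A n)"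
  let ?LB = "\<lambda>n S. \<integral>\<^sup>+xy. indicator S xy * ennreal (cond_info B n (fst xy) (snd xy)) \<partial>measure_pmf (B n)"
  let ?p = "\<lambda>n. ennreal (2 powr (-(real n * \<gamma>)))"
  \<comment> \<open>The bound of \<open>bad_input_Hs_eps_cross_le\<close>, with the information density of \<open>M\<close> replaced
    by those of the components through \<open>info_integral_mixture_le\<close>.\<close>
  define F where "F n = ennreal (1/\<epsilon>) * ((?LA n (fst -` {x. bad_input n \<delta> \<eta> x})
      + ennreal (1 / (a * ln 2)))
      + (?p n * ?LB n UNIV + ?p n * ennreal (1 / (b * ln 2)))
      + ennreal (b / a) * (?LB n (fst -` low_divergence_set B A n \<gamma>) + ennreal (1 / (b * ln 2))))" for n
  have F_sublinear: "sublinear F"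
  proof -
    have "?p n * ennreal (1 / (b * ln 2)) \<le> ennreal (1 / (b * ln 2))" for n
    proof -
      have "?p n \<le> 1" using g powr_mono[of "-(real n * \<gamma>)" 0 2] by (simp add: ennreal_le_1)
      thus ?thesis using mult_right_mono[of "?p n" 1 "ennreal (1 / (b * ln 2))"] by simp
    qed
    hence "sublinear (\<lambda>n. ?p n * ennreal (1 / (b * ln 2)))"
      by (intro sublinear_mono[OF sublinear_const] always_eventually allI)
    moreover have "sublinear (\<lambda>n. ?LB n (fst -` low_divergence_set B A n \<gamma>))"
      by (rule uniformly_integrable_sublinear[OF uiB]) (use AtB in simp)
    moreover have "sublinear (\<lambda>n. ?p n * ?LB n UNIV)"
      using sublinear_exp_decay_info[OF uiB g] by simp
    ultimately show ?thesis unfolding F_def using e a_pos b_pos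
      by (intro sublinear_cmult sublinear_add sublinear_bad_input_info[OF uiA DAB d h]
          sublinear_const) auto
  qed
  have "(\<integral>\<^sup>+x. indicator {x. bad_input n \<delta> \<eta> x} x * ennreal (PX A n x * hbar M n \<epsilon> x) \<partial>count_space UNIV)
      \<le> ennreal (1/\<epsilon>) * (?LMA n (fst -` {x. bad_input n \<delta> \<eta> x}) + ?p n * ?LMB n UNIV
       + ennreal (b / a) * ?LMB n (fst -` low_divergence_set B A n \<gamma>))" for n
    using bad_input_Hs_eps_cross_le[OF e g, of n \<delta> \<eta>] by (simp add: vimage_def)
  also have "\<dots> n \<le> F n" for n unfolding F_def
  proof (intro mult_left_mono add_mono info_integral_mixture_le sw.info_integral_mixture_le order.refl)
    have "?p n * ?LMB n UNIV \<le> ?p n * (?LB n UNIV + ennreal (1 / (b * ln 2)))"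
      by (intro mult_left_mono sw.info_integral_mixture_le) auto
    thus "?p n * ?LMB n UNIV \<le> ?p n * ?LB n UNIV + ?p n * ennreal (1 / (b * ln 2))"
      by (simp add: distrib_left)
  qed auto
  finally show ?thesis by (intro sublinear_mono[OF F_sublinear] always_eventually allI)
qed

lemma eventually_Hs_eps_cross_le:
  assumes uiA: "uniformly_integrable A" and uiB: "uniformly_integrable B"
    and DAB: "D_lower A B > 0" and DBA: "D_lower B A > 0"
    and e: "0 < \<eta>" "\<eta> < \<epsilon>" "\<epsilon> < 1" and z: "\<zeta> > 0"
  shows "eventually (\<lambda>n. Hs_eps_cross A M n \<epsilon> \<le> Hs_eps A (\<epsilon> - \<eta>) n + ennreal (real n * \<zeta>)) sequentially"
proof -
  define \<delta> where "\<delta> = \<zeta> / 2"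
  have d: "\<delta> > 0" using z by (simp add: \<delta>_def)
  have "eventually (\<lambda>n. (\<integral>\<^sup>+x. indicator {x. bad_input n \<delta> \<eta> x} x * ennreal (PX A n x * hbar M n \<epsilon> x)
      \<partial>count_space UNIV) \<le> ennreal (real n * \<delta>)) sequentially"
    using e by (intro sublinearD[OF sublinear_bad_input_Hs_eps_cross[OF uiA uiB DAB DBA _ _ d] d]) auto
  thus ?thesis
  proof (rule eventually_mono)
    fix n assume bad: "(\<integral>\<^sup>+x. indicator {x. bad_input n \<delta> \<eta> x} x * ennreal (PX A n x * hbar M n \<epsilon> x)
      \<partial>count_space UNIV) \<le> ennreal (real n * \<delta>)"
    have "Hs_eps_cross A M n \<epsilon> \<le> Hs_eps A (\<epsilon> - \<eta>) n + ennreal (real n * \<delta>) + ennreal (real n * \<delta>)"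
      using Hs_eps_cross_le[OF e less_imp_le[OF d], of n] bad by (meson add_left_mono order_trans)
    thus "Hs_eps_cross A M n \<epsilon> \<le> Hs_eps A (\<epsilon> - \<eta>) n + ennreal (real n * \<zeta>)"
      using d by (simp add: add.assoc \<delta>_def mult.commute flip: ennreal_plus)
  qed
qed

lemma sublinear_bad_input_Hs_eps:
  assumes uiA: "uniformly_integrable A" and DAB: "D_lower A B > 0"
    and e: "0 < \<epsilon>" "\<epsilon> < 1" and d: "\<delta> > 0" and h: "\<eta> > 0"
  shows "sublinear (\<lambda>n. \<integral>\<^sup>+x. indicator {x. bad_input n \<delta> \<eta> x} x * ennreal
      (PX A n x * hbar A n \<epsilon> x) \<partial>count_space UNIV)"
proof (rule sublinear_mono)
  show "sublinear (\<lambda>n. ennreal (1/\<epsilon>) * \<integral>\<^sup>+xy. indicator {x. bad_input n \<delta> \<eta> x} (fst xy)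
      * ennreal (cond_info A n (fst xy) (snd xy)) \<partial>measure_pmf (A n))"
    using e sublinear_bad_input_info[OF uiA DAB d h] unfolding indicator_vimage
    by (intro sublinear_cmult) auto
  show "\<forall>\<^sub>F n in sequentially. (\<integral>\<^sup>+x. indicator {x. bad_input n \<delta> \<eta> x} x * ennreal
      (PX A n x * hbar A n \<epsilon> x) \<partial>count_space UNIV)
      \<le> ennreal (1/\<epsilon>) * \<integral>\<^sup>+xy. indicator {x. bad_input n \<delta> \<eta> x} (fst xy)
      * ennreal (cond_info A n (fst xy) (snd xy)) \<partial>measure_pmf (A n)"
    by (intro always_eventually allI restricted_Hs_eps_le_info[OF e])
qed

lemma eventually_Hs_eps_le_cross:
  assumes uiA: "uniformly_integrable A" and DAB: "D_lower A B > 0"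
    and e: "0 < \<epsilon>" "0 < \<eta>" "\<epsilon> + \<eta> < 1" and z: "\<zeta> > 0"
  shows "eventually (\<lambda>n. Hs_eps A (\<epsilon> + \<eta>) n \<le> Hs_eps_cross A M n \<epsilon> + ennreal (real n * \<zeta>)) sequentially"
proof -
  define \<delta> where "\<delta> = \<zeta> / 2"
  have d: "\<delta> > 0" using z by (simp add: \<delta>_def)
  have "eventually (\<lambda>n. (\<integral>\<^sup>+x. indicator {x. bad_input n \<delta> \<eta> x} x * ennreal
      (PX A n x * hbar A n (\<epsilon> + \<eta>) x)
      \<partial>count_space UNIV) \<le> ennreal (real n * \<delta>)) sequentially"
    using e by (intro sublinearD[OF sublinear_bad_input_Hs_eps[OF uiA DAB _ _ d] d]) auto
  thus ?thesis
  proof (rule eventually_mono)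
    fix n assume bad: "(\<integral>\<^sup>+x. indicator {x. bad_input n \<delta> \<eta> x} x * ennreal
        (PX A n x * hbar A n (\<epsilon> + \<eta>) x)
      \<partial>count_space UNIV) \<le> ennreal (real n * \<delta>)"
    have "Hs_eps A (\<epsilon> + \<eta>) n \<le> Hs_eps_cross A M n \<epsilon> + ennreal (real n * \<delta>) + ennreal (real n * \<delta>)"
      using Hs_eps_le_cross[OF e less_imp_le[OF d], of n] bad by (meson add_left_mono order_trans)
    thus "Hs_eps A (\<epsilon> + \<eta>) n \<le> Hs_eps_cross A M n \<epsilon> + ennreal (real n * \<zeta>)"
      using d by (simp add: add.assoc \<delta>_def mult.commute flip: ennreal_plus)
  qed
qed

end

section \<open>Rates and the limit \<open>\<epsilon> \<rightarrow> 0\<close>\<close>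

lemma Hs_rate_eq_enn2ereal: "Hs_rate Q \<epsilon> n = enn2ereal (ennreal (1 / real n) * Hs_eps Q \<epsilon> n)"
  by (simp add: Hs_rate_def times_ennreal.rep_eq)

lemma Hs_rate_nonneg: "Hs_rate Q \<epsilon> n \<ge> 0"
  by (simp add: Hs_rate_eq_enn2ereal)

lemma Hs_rate_antimono:
  assumes e: "0 < \<epsilon>" "\<epsilon> \<le> \<epsilon>'" "\<epsilon>' < 1"
  shows "Hs_rate Q \<epsilon>' n \<le> Hs_rate Q \<epsilon> n"
proof -
  have h1: "Hs_eps Q \<epsilon>' n = (\<integral>\<^sup>+x. ennreal (PX Q n x * hbar Q n \<epsilon>' x) \<partial>count_space UNIV)"
    by (rule Hs_eps_eq_nn_integral) (use e in auto)
  have h2: "Hs_eps Q \<epsilon> n = (\<integral>\<^sup>+x. ennreal (PX Q n x * hbar Q n \<epsilon> x) \<partial>count_space UNIV)"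
    by (rule Hs_eps_eq_nn_integral) (use e in auto)
  have "Hs_eps Q \<epsilon>' n \<le> Hs_eps Q \<epsilon> n"
    unfolding h1 h2
  proof (intro nn_integral_mono ennreal_leI)
    fix x
    show "PX Q n x * hbar Q n \<epsilon>' x \<le> PX Q n x * hbar Q n \<epsilon> x"
    proof (cases "PX Q n x > 0")
      case True thus ?thesis using hbar_antimono[OF True e] by (simp add: mult_left_mono)
    next
      case False thus ?thesis using PX_eq_0_if_not_pos[OF False] by simp
    qed
  qed
  hence "ennreal (1 / real n) * Hs_eps Q \<epsilon>' n \<le> ennreal (1 / real n) * Hs_eps Q \<epsilon> n"
      by (rule mult_left_mono) simp
  thus ?thesis unfolding Hs_rate_eq_enn2ereal by (simp add: less_eq_ennreal.rep_eq)
qed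

lemma Hs_rate_le_combination:
  assumes n: "n \<ge> 1" and a: "a \<ge> 0" and b: "b \<ge> 0" and z: "\<zeta> \<ge> 0"
    and le: "Hs_eps M \<epsilon> n \<le> ennreal a * Hs_eps A \<epsilon>' n + ennreal b * Hs_eps B \<epsilon>' n + ennreal (real n * \<zeta>)"
  shows "Hs_rate M \<epsilon> n \<le> ereal a * Hs_rate A \<epsilon>' n + ereal b * Hs_rate B \<epsilon>' n + ereal \<zeta>"
proof -
  have "ennreal (1 / real n) * Hs_eps M \<epsilon> n \<le>
      ennreal (1 / real n) * (ennreal a * Hs_eps A \<epsilon>' n + ennreal b * Hs_eps B \<epsilon>' n
          + ennreal (real n * \<zeta>))"
    by (intro mult_left_mono le) auto
  also have "\<dots> = ennreal a * (ennreal (1 / real n) * Hs_eps A \<epsilon>' n)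
      + ennreal b * (ennreal (1 / real n) * Hs_eps B \<epsilon>' n)
      + ennreal (1 / real n) * ennreal (real n * \<zeta>)"
    by (simp add: distrib_left mult_ac)
  also have "ennreal (1 / real n) * ennreal (real n * \<zeta>) = ennreal \<zeta>"
    using n z by (simp add: ennreal_mult[symmetric])
  finally show ?thesis unfolding Hs_rate_eq_enn2ereal using a b z
      by (intro enn2ereal_combination_le) auto
qed

lemma combination_le_Hs_rate:
  assumes n: "n \<ge> 1" and a: "a \<ge> 0" and b: "b \<ge> 0" and z: "\<zeta> \<ge> 0"
    and le: "ennreal a * Hs_eps A \<epsilon>' n + ennreal b * Hs_eps B \<epsilon>' n \<le> Hs_eps M \<epsilon> n + ennreal (real n * \<zeta>)"
  shows "ereal a * Hs_rate A \<epsilon>' n + ereal b * Hs_rate B \<epsilon>' n \<le> Hs_rate M \<epsilon> n + ereal \<zeta>"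
proof -
  have "ennreal a * (ennreal (1 / real n) * Hs_eps A \<epsilon>' n)
      + ennreal b * (ennreal (1 / real n) * Hs_eps B \<epsilon>' n)
      = ennreal (1 / real n) * (ennreal a * Hs_eps A \<epsilon>' n + ennreal b * Hs_eps B \<epsilon>' n)"
    by (simp add: distrib_left mult_ac)
  also have "\<dots> \<le> ennreal (1 / real n) * (Hs_eps M \<epsilon> n + ennreal (real n * \<zeta>))"
    by (intro mult_left_mono le) auto
  also have "\<dots> = ennreal (1 / real n) * Hs_eps M \<epsilon> n + ennreal (1 / real n) * ennreal (real n * \<zeta>)"
    by (simp add: distrib_left)
  also have "ennreal (1 / real n) * ennreal (real n * \<zeta>) = ennreal \<zeta>"
    using n z by (simp add: ennreal_mult[symmetric])
  finally show ?thesis unfolding Hs_rate_eq_enn2ereal using a b z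
      by (intro enn2ereal_le_combination_plus) auto
qed

definition Hs_limsup :: "('a, 'b) source \<Rightarrow> real \<Rightarrow> ereal" where
  "Hs_limsup Q \<epsilon> = limsup (\<lambda>n. Hs_rate Q \<epsilon> n)"

lemma Hs_limsup_nonneg: "Hs_limsup Q \<epsilon> \<ge> 0"
proof -
  have "limsup (\<lambda>n. (0::ereal)) \<le> limsup (\<lambda>n. Hs_rate Q \<epsilon> n)"
    by (intro Limsup_mono always_eventually allI Hs_rate_nonneg)
  thus ?thesis by (simp add: Hs_limsup_def Limsup_const)
qed

lemma Hs_limsup_antimono: "0 < \<epsilon> \<Longrightarrow> \<epsilon> \<le> \<epsilon>' \<Longrightarrow> \<epsilon>' < 1 \<Longrightarrow> Hs_limsup Q \<epsilon>' \<le> Hs_limsup Q \<epsilon>"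
  unfolding Hs_limsup_def by (intro Limsup_mono always_eventually allI Hs_rate_antimono)

lemma Hs_upper_eq_SUP: "Hs_upper Q = (SUP \<epsilon>\<in>{0<..<1}. Hs_limsup Q \<epsilon>)"
proof -
  let ?S = "SUP \<epsilon>\<in>{0<..<1}. Hs_limsup Q \<epsilon>"
  have "((\<lambda>\<epsilon>. Hs_limsup Q \<epsilon>) \<longlongrightarrow> ?S) (at_right 0)"
  proof (rule order_tendstoI)
    fix y assume y: "y < ?S"
    then obtain \<epsilon>1 where e1: "\<epsilon>1 \<in> {0<..<1}" "y < Hs_limsup Q \<epsilon>1" by (auto simp: less_SUP_iff)
    show "eventually (\<lambda>\<epsilon>. y < Hs_limsup Q \<epsilon>) (at_right 0)"
      unfolding eventually_at_right_field
    proof (intro exI[of _ \<epsilon>1] conjI allI impI)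
      fix \<epsilon> :: real assume "0 < \<epsilon>" "\<epsilon> < \<epsilon>1"
      hence "Hs_limsup Q \<epsilon>1 \<le> Hs_limsup Q \<epsilon>" using e1 by (intro Hs_limsup_antimono) auto
      thus "y < Hs_limsup Q \<epsilon>" using e1 by simp
    qed (use e1 in auto)
  next
    fix y assume y: "?S < y"
    show "eventually (\<lambda>\<epsilon>. Hs_limsup Q \<epsilon> < y) (at_right 0)"
      unfolding eventually_at_right_field
    proof (intro exI[of _ 1] conjI allI impI)
      fix \<epsilon> :: real assume "0 < \<epsilon>" "\<epsilon> < 1"
      hence "Hs_limsup Q \<epsilon> \<le> ?S" by (intro SUP_upper) auto
      thus "Hs_limsup Q \<epsilon> < y" using y by simp
    qed auto
  qed
  hence "Lim (at_right 0) (\<lambda>\<epsilon>. Hs_limsup Q \<epsilon>) = ?S" by (intro tendsto_Lim) auto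
  thus ?thesis unfolding Hs_upper_def Hs_limsup_def by simp
qed

context source_mixture
begin

lemma ennreal_convex_combination_add:
  "ennreal a * (X + c) + ennreal b * (Y + c) = ennreal a * X + ennreal b * Y + c"
proof -
  have "ennreal a + ennreal b = 1" using a_pos b_pos ab by (simp flip: ennreal_plus)
  hence "ennreal a * c + ennreal b * c = c" by (simp flip: distrib_right)
  thus ?thesis by (simp add: distrib_left add_ac)
qed

lemma eventually_Hs_rate_mixture_le:
  assumes uiA: "uniformly_integrable A" and uiB: "uniformly_integrable B"
    and DAB: "D_lower A B > 0" and DBA: "D_lower B A > 0"
    and e: "0 < \<eta>" "\<eta> < \<epsilon>" "\<epsilon> < 1" and z: "\<zeta> > 0"
  shows "eventually (\<lambda>n. Hs_rate M \<epsilon> n \<le> ereal a * Hs_rate A (\<epsilon> - \<eta>) n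
      + ereal b * Hs_rate B (\<epsilon> - \<eta>) n + ereal \<zeta>) sequentially"
proof -
  interpret sw: source_mixture B A M b a by (rule mixture_swap)
  have "eventually (\<lambda>n. (Hs_eps_cross A M n \<epsilon> \<le> Hs_eps A (\<epsilon> - \<eta>) n + ennreal (real n * \<zeta>) \<and>
      Hs_eps_cross B M n \<epsilon> \<le> Hs_eps B (\<epsilon> - \<eta>) n + ennreal (real n * \<zeta>)) \<and> n \<ge> 1) sequentially"
    by (intro eventually_conj eventually_Hs_eps_cross_le sw.eventually_Hs_eps_cross_le uiA uiB DAB
        DBA e z
        eventually_ge_at_top)
  thus ?thesis
  proof (rule eventually_mono)
    fix n assume h: "(Hs_eps_cross A M n \<epsilon> \<le> Hs_eps A (\<epsilon> - \<eta>) n + ennreal (real n * \<zeta>) \<and>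
      Hs_eps_cross B M n \<epsilon> \<le> Hs_eps B (\<epsilon> - \<eta>) n + ennreal (real n * \<zeta>)) \<and> n \<ge> 1"
    have "Hs_eps M \<epsilon> n = ennreal a * Hs_eps_cross A M n \<epsilon> + ennreal b * Hs_eps_cross B M n \<epsilon>"
      by (rule Hs_eps_mixture_split) (use e in auto)
    also have "\<dots> \<le> ennreal a * (Hs_eps A (\<epsilon> - \<eta>) n + ennreal (real n * \<zeta>))
        + ennreal b * (Hs_eps B (\<epsilon> - \<eta>) n + ennreal (real n * \<zeta>))"
      using h by (intro add_mono mult_left_mono) auto
    finally show "Hs_rate M \<epsilon> n \<le> ereal a * Hs_rate A (\<epsilon> - \<eta>) n + ereal b * Hs_rate B (\<epsilon> - \<eta>) n
        + ereal \<zeta>"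
      using h a_pos b_pos z by (intro Hs_rate_le_combination) (auto simp: ennreal_convex_combination_add)
  qed
qed

lemma eventually_Hs_rate_components_le:
  assumes uiA: "uniformly_integrable A" and uiB: "uniformly_integrable B"
    and DAB: "D_lower A B > 0" and DBA: "D_lower B A > 0"
    and e: "0 < \<epsilon>" "0 < \<eta>" "\<epsilon> + \<eta> < 1" and z: "\<zeta> > 0"
  shows "eventually (\<lambda>n. ereal a * Hs_rate A (\<epsilon> + \<eta>) n + ereal b * Hs_rate B (\<epsilon> + \<eta>) n
      \<le> Hs_rate M \<epsilon> n + ereal \<zeta>) sequentially"
proof -
  interpret sw: source_mixture B A M b a by (rule mixture_swap)
  have "eventually (\<lambda>n. (Hs_eps A (\<epsilon> + \<eta>) n \<le> Hs_eps_cross A M n \<epsilon> + ennreal (real n * \<zeta>) \<and>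
      Hs_eps B (\<epsilon> + \<eta>) n \<le> Hs_eps_cross B M n \<epsilon> + ennreal (real n * \<zeta>)) \<and> n \<ge> 1) sequentially"
    by (intro eventually_conj eventually_Hs_eps_le_cross sw.eventually_Hs_eps_le_cross uiA uiB DAB
        DBA e z
        eventually_ge_at_top)
  thus ?thesis
  proof (rule eventually_mono)
    fix n assume h: "(Hs_eps A (\<epsilon> + \<eta>) n \<le> Hs_eps_cross A M n \<epsilon> + ennreal (real n * \<zeta>) \<and>
      Hs_eps B (\<epsilon> + \<eta>) n \<le> Hs_eps_cross B M n \<epsilon> + ennreal (real n * \<zeta>)) \<and> n \<ge> 1"
    have "ennreal a * Hs_eps A (\<epsilon> + \<eta>) n + ennreal b * Hs_eps B (\<epsilon> + \<eta>) n \<le>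
       ennreal a * (Hs_eps_cross A M n \<epsilon> + ennreal (real n * \<zeta>))
           + ennreal b * (Hs_eps_cross B M n \<epsilon> + ennreal (real n * \<zeta>))"
      using h by (intro add_mono mult_left_mono) auto
    also have "\<dots> = Hs_eps M \<epsilon> n + ennreal (real n * \<zeta>)"
      using e by (simp add: ennreal_convex_combination_add Hs_eps_mixture_split)
    finally show "ereal a * Hs_rate A (\<epsilon> + \<eta>) n + ereal b * Hs_rate B (\<epsilon> + \<eta>) n \<le> Hs_rate M \<epsilon> n
        + ereal \<zeta>"
      using h a_pos b_pos z by (intro combination_le_Hs_rate) auto
  qed
qed

lemma Hs_limsup_mixture_le:
  assumes uiA: "uniformly_integrable A" and uiB: "uniformly_integrable B"
    and DAB: "D_lower A B > 0" and DBA: "D_lower B A > 0"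
    and e: "0 < \<eta>" "\<eta> < \<epsilon>" "\<epsilon> < 1"
  shows "Hs_limsup M \<epsilon> \<le> ereal a * Hs_limsup A (\<epsilon> - \<eta>) + ereal b * Hs_limsup B (\<epsilon> - \<eta>)"
proof (rule ereal_le_epsilon2)
  fix \<zeta> :: real assume z: "0 < \<zeta>"
  have "Hs_limsup M \<epsilon> \<le> limsup (\<lambda>n. (ereal a * Hs_rate A (\<epsilon> - \<eta>) n
      + ereal b * Hs_rate B (\<epsilon> - \<eta>) n) + ereal \<zeta>)"
    unfolding Hs_limsup_def by (rule Limsup_mono[OF
        eventually_Hs_rate_mixture_le[OF uiA uiB DAB DBA e z]])
  also have "\<dots> \<le> limsup (\<lambda>n. ereal a * Hs_rate A (\<epsilon> - \<eta>) n + ereal b * Hs_rate B (\<epsilon> - \<eta>) n)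
      + limsup (\<lambda>n. ereal \<zeta>)"
    by (rule ereal_limsup_add_mono)
  also have "limsup (\<lambda>n. ereal a * Hs_rate A (\<epsilon> - \<eta>) n + ereal b * Hs_rate B (\<epsilon> - \<eta>) n) \<le>
      limsup (\<lambda>n. ereal a * Hs_rate A (\<epsilon> - \<eta>) n) + limsup (\<lambda>n. ereal b * Hs_rate B (\<epsilon> - \<eta>) n)"
    by (rule ereal_limsup_add_mono)
  also have "limsup (\<lambda>n. ereal a * Hs_rate A (\<epsilon> - \<eta>) n) = ereal a * Hs_limsup A (\<epsilon> - \<eta>)"
    unfolding Hs_limsup_def using a_pos by (simp add: limsup_ereal_mult_left)
  also have "limsup (\<lambda>n. ereal b * Hs_rate B (\<epsilon> - \<eta>) n) = ereal b * Hs_limsup B (\<epsilon> - \<eta>)"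
    unfolding Hs_limsup_def using b_pos by (simp add: limsup_ereal_mult_left)
  also have "limsup (\<lambda>n. ereal \<zeta>) = ereal \<zeta>" by (simp add: Limsup_const)
  finally show "Hs_limsup M \<epsilon> \<le> ereal a * Hs_limsup A (\<epsilon> - \<eta>) + ereal b * Hs_limsup B (\<epsilon> - \<eta>) + ereal \<zeta>"
    by (simp add: add_mono)
qed

lemma Hs_limsup_components_le:
  assumes uiA: "uniformly_integrable A" and uiB: "uniformly_integrable B"
    and DAB: "D_lower A B > 0" and DBA: "D_lower B A > 0"
    and e: "0 < \<epsilon>" "0 < \<eta>" "\<epsilon> + \<eta> < 1" and conv: "convergent (\<lambda>n. Hs_rate A (\<epsilon> + \<eta>) n)"
  shows "ereal a * Hs_limsup A (\<epsilon> + \<eta>) + ereal b * Hs_limsup B (\<epsilon> + \<eta>) \<le> Hs_limsup M \<epsilon>"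
proof (rule ereal_le_epsilon2)
  fix \<zeta> :: real assume z: "0 < \<zeta>"
  obtain l where l: "(\<lambda>n. Hs_rate A (\<epsilon> + \<eta>) n) \<longlonglongrightarrow> l" using conv by (auto simp: convergent_def)
  have ul: "Hs_limsup A (\<epsilon> + \<eta>) = l" unfolding Hs_limsup_def
      using lim_imp_Limsup[of sequentially _ l] l by simp
  have al: "(\<lambda>n. ereal a * Hs_rate A (\<epsilon> + \<eta>) n) \<longlonglongrightarrow> ereal a * l"
    by (rule tendsto_cmult_ereal[OF _ l]) simp
  have "ereal a * Hs_limsup A (\<epsilon> + \<eta>) + ereal b * Hs_limsup B (\<epsilon> + \<eta>) = ereal a * l
      + limsup (\<lambda>n. ereal b * Hs_rate B (\<epsilon> + \<eta>) n)"
    using ul b_pos unfolding Hs_limsup_def by (simp add: limsup_ereal_mult_left)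
  also have "\<dots> \<le> limsup (\<lambda>n. ereal a * Hs_rate A (\<epsilon> + \<eta>) n + ereal b * Hs_rate B (\<epsilon> + \<eta>) n)"
    by (rule ereal_lim_add_limsup_le[OF al]) (use a_pos b_pos Hs_rate_nonneg in \<open>auto simp:
        ereal_zero_le_0_iff\<close>)
  also have "\<dots> \<le> limsup (\<lambda>n. Hs_rate M \<epsilon> n + ereal \<zeta>)"
    by (rule Limsup_mono[OF eventually_Hs_rate_components_le[OF uiA uiB DAB DBA e z]])
  also have "\<dots> \<le> limsup (\<lambda>n. Hs_rate M \<epsilon> n) + limsup (\<lambda>n. ereal \<zeta>)"
    by (rule ereal_limsup_add_mono)
  also have "limsup (\<lambda>n. ereal \<zeta>) = ereal \<zeta>" by (simp add: Limsup_const)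
  finally show "ereal a * Hs_limsup A (\<epsilon> + \<eta>) + ereal b * Hs_limsup B (\<epsilon> + \<eta>) \<le> Hs_limsup M \<epsilon> + ereal \<zeta>"
    by (simp add: Hs_limsup_def)
qed

lemma Hs_upper_mixture_le:
  assumes uiA: "uniformly_integrable A" and uiB: "uniformly_integrable B"
    and DAB: "D_lower A B > 0" and DBA: "D_lower B A > 0"
  shows "Hs_upper M \<le> ereal a * Hs_upper A + ereal b * Hs_upper B"
  unfolding Hs_upper_eq_SUP
proof (rule SUP_least)
  fix \<epsilon> :: real assume e: "\<epsilon> \<in> {0<..<1}"
  have "Hs_limsup M \<epsilon> \<le> ereal a * Hs_limsup A (\<epsilon> - \<epsilon>/2) + ereal b * Hs_limsup B (\<epsilon> - \<epsilon>/2)"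
    by (rule Hs_limsup_mixture_le[OF uiA uiB DAB DBA]) (use e in auto)
  also have "\<dots> \<le> ereal a * (SUP \<epsilon>\<in>{0<..<1}. Hs_limsup A \<epsilon>) + ereal b * (SUP \<epsilon>\<in>{0<..<1}. Hs_limsup B \<epsilon>)"
    using e a_pos b_pos by (intro add_mono ereal_mult_left_mono SUP_upper) auto
  finally show "Hs_limsup M \<epsilon> \<le> ereal a * (SUP \<epsilon>\<in>{0<..<1}. Hs_limsup A \<epsilon>)
      + ereal b * (SUP \<epsilon>\<in>{0<..<1}. Hs_limsup B \<epsilon>)" .
qed

lemma combination_le_Hs_upper_mixture:
  assumes uiA: "uniformly_integrable A" and uiB: "uniformly_integrable B"
    and DAB: "D_lower A B > 0" and DBA: "D_lower B A > 0"
    and e0: "\<epsilon>0 > 0" and conv: "\<And>\<epsilon>. 0 < \<epsilon> \<Longrightarrow> \<epsilon> < \<epsilon>0 \<Longrightarrow> convergent (\<lambda>n. Hs_rate A \<epsilon> n)"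
  shows "ereal a * Hs_upper A + ereal b * Hs_upper B \<le> Hs_upper M"
  unfolding Hs_upper_eq_SUP
proof -
  have "ereal a * (SUP \<epsilon>\<in>{0<..<1}. Hs_limsup A \<epsilon>) + ereal b * (SUP \<epsilon>\<in>{0<..<1}. Hs_limsup B \<epsilon>)
      = (SUP \<epsilon>\<in>{0<..<1}. ereal a * Hs_limsup A \<epsilon> + ereal b * Hs_limsup B \<epsilon>)"
    by (rule SUP_ereal_combination_antimono) (use a_pos b_pos Hs_limsup_nonneg Hs_limsup_antimono
        in auto)
  also have "\<dots> \<le> (SUP \<epsilon>\<in>{0<..<1}. Hs_limsup M \<epsilon>)"
  proof (rule SUP_least)
    fix \<epsilon> :: real assume e: "\<epsilon> \<in> {0<..<1}"
    define \<epsilon>' where "\<epsilon>' = min \<epsilon> \<epsilon>0 / 3"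
    have e': "0 < \<epsilon>'" "\<epsilon>' + \<epsilon>' < \<epsilon>0" "\<epsilon>' + \<epsilon>' \<le> \<epsilon>" "\<epsilon>' + \<epsilon>' < 1" "\<epsilon>' < 1"
      using e e0 by (auto simp: \<epsilon>'_def min_def)
    have "ereal a * Hs_limsup A \<epsilon> + ereal b * Hs_limsup B \<epsilon>
        \<le> ereal a * Hs_limsup A (\<epsilon>' + \<epsilon>') + ereal b * Hs_limsup B (\<epsilon>' + \<epsilon>')"
      using e e' a_pos b_pos by (intro add_mono ereal_mult_left_mono Hs_limsup_antimono) auto
    also have "\<dots> \<le> Hs_limsup M \<epsilon>'"
      by (rule Hs_limsup_components_le[OF uiA uiB DAB DBA]) (use e' conv in auto)
    also have "\<dots> \<le> (SUP \<epsilon>\<in>{0<..<1}. Hs_limsup M \<epsilon>)" using e' by (intro SUP_upper) auto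
    finally show "ereal a * Hs_limsup A \<epsilon> + ereal b * Hs_limsup B \<epsilon> \<le> (SUP \<epsilon>\<in>{0<..<1}. Hs_limsup M \<epsilon>)" .
  qed
  finally show "ereal a * (SUP \<epsilon>\<in>{0<..<1}. Hs_limsup A \<epsilon>) + ereal b * (SUP \<epsilon>\<in>{0<..<1}. Hs_limsup B \<epsilon>)
      \<le> (SUP \<epsilon>\<in>{0<..<1}. Hs_limsup M \<epsilon>)" .
qed

lemma Hs_upper_mixture:
  assumes uiA: "uniformly_integrable A" and uiB: "uniformly_integrable B"
    and DAB: "D_lower A B > 0" and DBA: "D_lower B A > 0"
    and conv: "\<exists>\<epsilon>0>0. \<forall>\<epsilon>. 0 < \<epsilon> \<and> \<epsilon> < \<epsilon>0 \<longrightarrow> convergent (\<lambda>n. Hs_rate A \<epsilon> n)"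
  shows "Hs_upper M = ereal a * Hs_upper A + ereal b * Hs_upper B"
  using conv Hs_upper_mixture_le[OF uiA uiB DAB DBA] combination_le_Hs_upper_mixture[OF uiA uiB DAB DBA]
  by (auto intro: antisym)

end

theorem corollary2:
  fixes P1 P2 P :: "('a::countable, 'b::countable) source" and \<alpha>1 \<alpha>2 :: real
  assumes src1: "general_source P1" and src2: "general_source P2"
    and ui1: "uniformly_integrable P1" and ui2: "uniformly_integrable P2"
    and D12: "D_lower P1 P2 > 0" and D21: "D_lower P2 P1 > 0"
    and a1: "\<alpha>1 > 0" and a2: "\<alpha>2 > 0" and a12: "\<alpha>1 + \<alpha>2 = 1"
    and mix: "\<And>n xy. pmf (P n) xy = \<alpha>1 * pmf (P1 n) xy + \<alpha>2 * pmf (P2 n) xy"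
    and lim: "(\<exists>\<epsilon>0>0. \<forall>\<epsilon>. 0 < \<epsilon> \<and> \<epsilon> < \<epsilon>0 \<longrightarrow> convergent (\<lambda>n. Hs_rate P1 \<epsilon> n)) \<or>
              (\<exists>\<epsilon>0>0. \<forall>\<epsilon>. 0 < \<epsilon> \<and> \<epsilon> < \<epsilon>0 \<longrightarrow> convergent (\<lambda>n. Hs_rate P2 \<epsilon> n))"
  shows "Hs_upper P = ereal \<alpha>1 * Hs_upper P1 + ereal \<alpha>2 * Hs_upper P2"
proof -
  interpret m: source_mixture P1 P2 P \<alpha>1 \<alpha>2 by unfold_locales (use a1 a2 a12 mix in auto)
  from lim show ?thesis
  proof
    assume c1: "\<exists>\<epsilon>0>0. \<forall>\<epsilon>. 0 < \<epsilon> \<and> \<epsilon> < \<epsilon>0 \<longrightarrow> convergent (\<lambda>n. Hs_rate P1 \<epsilon> n)"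
    show ?thesis by (rule m.Hs_upper_mixture[OF ui1 ui2 D12 D21 c1])
  next
    assume c2: "\<exists>\<epsilon>0>0. \<forall>\<epsilon>. 0 < \<epsilon> \<and> \<epsilon> < \<epsilon>0 \<longrightarrow> convergent (\<lambda>n. Hs_rate P2 \<epsilon> n)"
    interpret m2: source_mixture P2 P1 P \<alpha>2 \<alpha>1 by (rule m.mixture_swap)
    have "Hs_upper P = ereal \<alpha>2 * Hs_upper P2 + ereal \<alpha>1 * Hs_upper P1"
      by (rule m2.Hs_upper_mixture[OF ui2 ui1 D21 D12 c2])
    thus ?thesis by (simp add: add.commute)
  qed
qed

end
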